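(* Let $1\le p\le q\le\infty$ and let $E$ be an angelic, complete and barrelled locally convex space (for example, a strict $(LF)$-space). Then the following properties of $E$ are all equivalent: $GP_{(p,q)}$, $EGP_{(p,q)}$, $sGP_{(p,q)}$, $sEGP_{(p,q)}$, $prGP_{(p,q)}$, $prEGP_{(p,q)}$, $spGP_{(p,q)}$, $spEGP_{(p,q)}$ and $b$-$GP_{(p,q)}$.
   Context: All locally convex spaces (lcs) are Hausdorff over $\mathbb F\in\{\mathbb R,\mathbb C\}$. $E'$ is the dual of $E$. For $A\subseteq E$ and $\chi\in E'$, $\|\chi\|_A:=\sup\{|\chi(x)|:x\in A\cup\{0\}\}$. A sequence $(\chi_n)$ in $E'$ is weak$^*$ $p$-summable ($p\in[1,\infty]$) if $(\chi_n(x))_n\in\ell_p$ for every $x\in E$ (in $c_0$ if $p=\infty$). For $1\le p\le q\le\infty$, a nonempty $A\subseteq E$ is $(p,q)$-limited (resp. $(p,q)$-$\mathcal E$-limited) if for every (resp. every equicontinuous) weak$^*$ $p$-summable sequence $(\chi_n)$ in $E'$, $(\|\chi_n\|_A)_n\in\ell_q$ if $q<\infty$ and $\|\chi_n\|_A\to0$ if $q=\infty$. A set is sequentially precompact if each of its sequences has a Cauchy subsequence, and relatively sequentially compact if each of its sequences has a subsequence converging in $E$. $E$ has the $GP_{(p,q)}$ (resp. $prGP_{(p,q)}$, $sGP_{(p,q)}$, $spGP_{(p,q)}$) property if every $(p,q)$-limited subset of $E$ is relatively compact (resp. precompact, relatively sequentially compact, sequentially precompact); the properties $EGP_{(p,q)}$,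 $prEGP_{(p,q)}$, $sEGP_{(p,q)}$, $spEGP_{(p,q)}$ are defined in the same way with "$(p,q)$-limited" replaced by "$(p,q)$-$\mathcal E$-limited". $E$ has the $b$-$GP_{(p,q)}$ property if every $(p,q)$-limited subset of $E$ is precompact in the strong topology $\beta(E,E')$. A Tychonoff space $X$ is angelic if every relatively countably compact subset is relatively compact and every compact subspace is Fréchet–Urysohn. A strict $(LF)$-space is the strict inductive limit of an increasing sequence of Fréchet spaces $E_n$ with $E_{m}$ inducing on $E_n$ its original topology for $n\le m$. *)

theory Defs
  imports "HOL-Analysis.Analysis"
begin

text \<open>A Hausdorff locally convex space over a complete normed field 'k (i.e. R or C)
is modelled as a vector space (carrier: the whole type 'v, scalar action smul)
together with a separating family P of seminorms generating its topology.\<close>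

definition is_seminorm :: "('k::real_normed_field \<Rightarrow> 'v::ab_group_add \<Rightarrow> 'v) \<Rightarrow> ('v \<Rightarrow> real) \<Rightarrow> bool" where
  "is_seminorm smul p \<longleftrightarrow> (\<forall>x y. p (x + y) \<le> p x + p y) \<and> (\<forall>c x. p (smul c x) = norm c * p x)"

definition lcs :: "('k::real_normed_field \<Rightarrow> 'v::ab_group_add \<Rightarrow> 'v) \<Rightarrow> ('v \<Rightarrow> real) set \<Rightarrow> bool" where
  "lcs smul P \<longleftrightarrow> Vector_Spaces.vector_space smul \<and> (\<forall>p\<in>P. is_seminorm smul p)
      \<and> (\<forall>x. x \<noteq> 0 \<longrightarrow> (\<exists>p\<in>P. p x \<noteq> 0))"

definition seminorm_top :: "('v::ab_group_add \<Rightarrow> real) set \<Rightarrow> 'v topology" where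
  "seminorm_top P = topology (\<lambda>U. \<forall>x\<in>U. \<exists>Q \<epsilon>. finite Q \<and> Q \<subseteq> P \<and> \<epsilon> > 0 \<and>
      {y. \<forall>p\<in>Q. p (y - x) < \<epsilon>} \<subseteq> U)"


lemma istopology_seminorm_top:
  fixes P :: "('v::ab_group_add \<Rightarrow> real) set"
  shows "istopology (\<lambda>U. \<forall>x\<in>U. \<exists>Q \<epsilon>. finite Q \<and> Q \<subseteq> P \<and> \<epsilon> > 0 \<and>
      {y. \<forall>p\<in>Q. p (y - x) < \<epsilon>} \<subseteq> U)"
  unfolding istopology_def
proof (intro conjI allI impI)
  fix S T :: "'v set"
  assume S: "\<forall>x\<in>S. \<exists>Q \<epsilon>. finite Q \<and> Q \<subseteq> P \<and> \<epsilon> > 0 \<and> {y. \<forall>p\<in>Q. p (y - x) < \<epsilon>} \<subseteq> S"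
     and T: "\<forall>x\<in>T. \<exists>Q \<epsilon>. finite Q \<and> Q \<subseteq> P \<and> \<epsilon> > 0 \<and> {y. \<forall>p\<in>Q. p (y - x) < \<epsilon>} \<subseteq> T"
  show "\<forall>x\<in>S \<inter> T. \<exists>Q \<epsilon>. finite Q \<and> Q \<subseteq> P \<and> \<epsilon> > 0 \<and> {y. \<forall>p\<in>Q. p (y - x) < \<epsilon>} \<subseteq> S \<inter> T"
  proof
    fix x assume "x \<in> S \<inter> T"
    then obtain Q1 e1 Q2 e2 where 1: "finite Q1" "Q1 \<subseteq> P" "e1 > 0" "{y. \<forall>p\<in>Q1. p (y - x) < e1} \<subseteq> S"
      and 2: "finite Q2" "Q2 \<subseteq> P" "e2 > 0" "{y. \<forall>p\<in>Q2. p (y - x) < e2} \<subseteq> T"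
      using S T by (meson IntD1 IntD2)
    have "{y. \<forall>p\<in>Q1 \<union> Q2. p (y - x) < min e1 e2} \<subseteq> S \<inter> T"
    proof -
      have "{y. \<forall>p\<in>Q1 \<union> Q2. p (y - x) < min e1 e2} \<subseteq> {y. \<forall>p\<in>Q1. p (y - x) < e1}" by auto
      moreover have "{y. \<forall>p\<in>Q1 \<union> Q2. p (y - x) < min e1 e2} \<subseteq> {y. \<forall>p\<in>Q2. p (y - x) < e2}" by auto
      ultimately show ?thesis using 1(4) 2(4) by blast
    qed
    then show "\<exists>Q \<epsilon>. finite Q \<and> Q \<subseteq> P \<and> \<epsilon> > 0 \<and> {y. \<forall>p\<in>Q. p (y - x) < \<epsilon>} \<subseteq> S \<inter> T"
      using 1 2 by (intro exI[of _ "Q1 \<union> Q2"] exI[of _ "min e1 e2"]) simp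
  qed
next
  fix K :: "'v set set"
  assume "\<forall>U\<in>K. \<forall>x\<in>U. \<exists>Q \<epsilon>. finite Q \<and> Q \<subseteq> P \<and> \<epsilon> > 0 \<and> {y. \<forall>p\<in>Q. p (y - x) < \<epsilon>} \<subseteq> U"
  then show "\<forall>x\<in>\<Union>K. \<exists>Q \<epsilon>. finite Q \<and> Q \<subseteq> P \<and> \<epsilon> > 0 \<and> {y. \<forall>p\<in>Q. p (y - x) < \<epsilon>} \<subseteq> \<Union>K"
    by (meson Union_upper order_trans UnionE)
qed

definition dual :: "('k::real_normed_field \<Rightarrow> 'v::ab_group_add \<Rightarrow> 'v) \<Rightarrow> ('v \<Rightarrow> real) set \<Rightarrow> ('v \<Rightarrow> 'k) set" where
  "dual smul P = {\<phi>. Vector_Spaces.linear smul (\<lambda>a b. a * b) \<phi> \<and> continuous_map (seminorm_top P) euclidean \<phi>}"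

text \<open>Membership in l_p for p in [1,\<infinity>]; for p = \<infinity> this means c_0 (as in the paper's conventions).\<close>
definition in_lp :: "ereal \<Rightarrow> (nat \<Rightarrow> real) \<Rightarrow> bool" where
  "in_lp p s \<longleftrightarrow> (if p = \<infinity> then s \<longlonglongrightarrow> 0 else summable (\<lambda>n. \<bar>s n\<bar> powr real_of_ereal p))"

definition weak_star_summable :: "('k::real_normed_field \<Rightarrow> 'v::ab_group_add \<Rightarrow> 'v) \<Rightarrow> ('v \<Rightarrow> real) set \<Rightarrow> ereal \<Rightarrow> (nat \<Rightarrow> 'v \<Rightarrow> 'k) \<Rightarrow> bool" where
  "weak_star_summable smul P p \<phi>s \<longleftrightarrow> (\<forall>n. \<phi>s n \<in> dual smul P) \<and> (\<forall>x. in_lp p (\<lambda>n. norm (\<phi>s n x)))"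

definition norm_on :: "'v::ab_group_add set \<Rightarrow> ('v \<Rightarrow> 'k::real_normed_field) \<Rightarrow> real" where
  "norm_on A \<phi> = Sup ((\<lambda>x. norm (\<phi> x)) ` (A \<union> {0}))"

definition norm_on_finite :: "'v::ab_group_add set \<Rightarrow> ('v \<Rightarrow> 'k::real_normed_field) \<Rightarrow> bool" where
  "norm_on_finite A \<phi> \<longleftrightarrow> bdd_above ((\<lambda>x. norm (\<phi> x)) ` (A \<union> {0}))"

definition equicontinuous :: "'v topology \<Rightarrow> ('v \<Rightarrow> 'k::real_normed_vector) set \<Rightarrow> bool" where
  "equicontinuous T H \<longleftrightarrow> (\<forall>x0\<in>topspace T. \<forall>\<epsilon>>0. \<exists>U. openin T U \<and> x0 \<in> U \<and>
      (\<forall>\<phi>\<in>H. \<forall>x\<in>U. norm (\<phi> x - \<phi> x0) < \<epsilon>))"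

definition pq_limited :: "('k::real_normed_field \<Rightarrow> 'v::ab_group_add \<Rightarrow> 'v) \<Rightarrow> ('v \<Rightarrow> real) set \<Rightarrow> ereal \<Rightarrow> ereal \<Rightarrow> 'v set \<Rightarrow> bool" where
  "pq_limited smul P p q A \<longleftrightarrow> A \<noteq> {} \<and> (\<forall>\<phi>s. weak_star_summable smul P p \<phi>s \<longrightarrow>
      (\<forall>n. norm_on_finite A (\<phi>s n)) \<and> in_lp q (\<lambda>n. norm_on A (\<phi>s n)))"

definition pq_E_limited :: "('k::real_normed_field \<Rightarrow> 'v::ab_group_add \<Rightarrow> 'v) \<Rightarrow> ('v \<Rightarrow> real) set \<Rightarrow> ereal \<Rightarrow> ereal \<Rightarrow> 'v set \<Rightarrow> bool" where
  "pq_E_limited smul P p q A \<longleftrightarrow> A \<noteq> {} \<and> (\<forall>\<phi>s. weak_star_summable smul P p \<phi>s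
      \<and> equicontinuous (seminorm_top P) (range \<phi>s) \<longrightarrow>
      (\<forall>n. norm_on_finite A (\<phi>s n)) \<and> in_lp q (\<lambda>n. norm_on A (\<phi>s n)))"

definition rel_compact :: "'a topology \<Rightarrow> 'a set \<Rightarrow> bool" where
  "rel_compact T A \<longleftrightarrow> compactin T (T closure_of A)"

definition precompact :: "'v::ab_group_add topology \<Rightarrow> 'v set \<Rightarrow> bool" where
  "precompact T A \<longleftrightarrow> (\<forall>U. openin T U \<and> 0 \<in> U \<longrightarrow>
      (\<exists>F. finite F \<and> A \<subseteq> (\<Union>f\<in>F. (\<lambda>u. f + u) ` U)))"

definition rel_seq_compact :: "'a topology \<Rightarrow> 'a set \<Rightarrow> bool" where
  "rel_seq_compact T A \<longleftrightarrow> (\<forall>s::nat \<Rightarrow> _. range s \<subseteq> A \<longrightarrow>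
      (\<exists>r l. strict_mono r \<and> limitin T (s \<circ> r) l sequentially))"

definition cauchy_seq_sn :: "('v::ab_group_add \<Rightarrow> real) set \<Rightarrow> (nat \<Rightarrow> 'v) \<Rightarrow> bool" where
  "cauchy_seq_sn P s \<longleftrightarrow> (\<forall>p\<in>P. \<forall>\<epsilon>>0. \<exists>N. \<forall>m\<ge>N. \<forall>n\<ge>N. p (s m - s n) < \<epsilon>)"

definition seq_precompact :: "('v::ab_group_add \<Rightarrow> real) set \<Rightarrow> 'v set \<Rightarrow> bool" where
  "seq_precompact P A \<longleftrightarrow> (\<forall>s::nat \<Rightarrow> _. range s \<subseteq> A \<longrightarrow> (\<exists>r. strict_mono r \<and> cauchy_seq_sn P (s \<circ> r)))"

text \<open>Strong topology \<beta>(E,E'): uniform convergence on \<sigma>(E',E)-bounded subsets of E'.\<close>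
definition strong_seminorms :: "('k::real_normed_field \<Rightarrow> 'v::ab_group_add \<Rightarrow> 'v) \<Rightarrow> ('v \<Rightarrow> real) set \<Rightarrow> ('v \<Rightarrow> real) set" where
  "strong_seminorms smul P = {(\<lambda>x. Sup (insert 0 ((\<lambda>\<phi>. norm (\<phi> x)) ` B))) | B.
      B \<subseteq> dual smul P \<and> (\<forall>x. bdd_above ((\<lambda>\<phi>. norm (\<phi> x)) ` B))}"

definition strong_top :: "('k::real_normed_field \<Rightarrow> 'v::ab_group_add \<Rightarrow> 'v) \<Rightarrow> ('v \<Rightarrow> real) set \<Rightarrow> 'v topology" where
  "strong_top smul P = seminorm_top (strong_seminorms smul P)"

definition cauchy_filter_sn :: "('v::ab_group_add \<Rightarrow> real) set \<Rightarrow> 'v filter \<Rightarrow> bool" where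
  "cauchy_filter_sn P F \<longleftrightarrow> F \<noteq> bot \<and> (\<forall>p\<in>P. \<forall>\<epsilon>>0. \<exists>A. eventually (\<lambda>x. x \<in> A) F \<and>
      (\<forall>x\<in>A. \<forall>y\<in>A. p (x - y) < \<epsilon>))"

definition complete_lcs :: "('v::ab_group_add \<Rightarrow> real) set \<Rightarrow> bool" where
  "complete_lcs P \<longleftrightarrow> (\<forall>F. cauchy_filter_sn P F \<longrightarrow> (\<exists>l. limitin (seminorm_top P) (\<lambda>x. x) l F))"

definition absolutely_convex :: "('k::real_normed_field \<Rightarrow> 'v::ab_group_add \<Rightarrow> 'v) \<Rightarrow> 'v set \<Rightarrow> bool" where
  "absolutely_convex smul B \<longleftrightarrow> (\<forall>x\<in>B. \<forall>y\<in>B. \<forall>a b. norm a + norm b \<le> 1 \<longrightarrow> smul a x + smul b y \<in> B)"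

definition absorbing :: "('k::real_normed_field \<Rightarrow> 'v::ab_group_add \<Rightarrow> 'v) \<Rightarrow> 'v set \<Rightarrow> bool" where
  "absorbing smul B \<longleftrightarrow> (\<forall>x. \<exists>t>0. \<forall>c. norm c \<le> t \<longrightarrow> smul c x \<in> B)"

definition barrelled :: "('k::real_normed_field \<Rightarrow> 'v::ab_group_add \<Rightarrow> 'v) \<Rightarrow> ('v \<Rightarrow> real) set \<Rightarrow> bool" where
  "barrelled smul P \<longleftrightarrow> (\<forall>B. closedin (seminorm_top P) B \<and> B \<noteq> {} \<and> absolutely_convex smul B \<and> absorbing smul B
      \<longrightarrow> (\<exists>U. openin (seminorm_top P) U \<and> 0 \<in> U \<and> U \<subseteq> B))"

definition cluster_point_seq :: "'a topology \<Rightarrow> (nat \<Rightarrow> 'a) \<Rightarrow> 'a \<Rightarrow> bool" where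
  "cluster_point_seq T s x \<longleftrightarrow> x \<in> topspace T \<and>
      (\<forall>U. openin T U \<and> x \<in> U \<longrightarrow> (\<exists>\<^sub>F n in sequentially. s n \<in> U))"

definition rel_countably_compact :: "'a topology \<Rightarrow> 'a set \<Rightarrow> bool" where
  "rel_countably_compact T A \<longleftrightarrow> A \<subseteq> topspace T \<and>
      (\<forall>s::nat \<Rightarrow> _. range s \<subseteq> A \<longrightarrow> (\<exists>x. cluster_point_seq T s x))"

definition frechet_urysohn :: "'a topology \<Rightarrow> bool" where
  "frechet_urysohn T \<longleftrightarrow> (\<forall>S x. S \<subseteq> topspace T \<and> x \<in> T closure_of S \<longrightarrow>
      (\<exists>s. range s \<subseteq> S \<and> limitin T s x sequentially))"

definition angelic :: "'a topology \<Rightarrow> bool" where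
  "angelic T \<longleftrightarrow> (\<forall>A. rel_countably_compact T A \<longrightarrow> rel_compact T A) \<and>
      (\<forall>K. compactin T K \<longrightarrow> frechet_urysohn (subtopology T K))"

definition GP where "GP smul P p q \<longleftrightarrow> (\<forall>A. pq_limited smul P p q A \<longrightarrow> rel_compact (seminorm_top P) A)"
definition EGP where "EGP smul P p q \<longleftrightarrow> (\<forall>A. pq_E_limited smul P p q A \<longrightarrow> rel_compact (seminorm_top P) A)"
definition prGP where "prGP smul P p q \<longleftrightarrow> (\<forall>A. pq_limited smul P p q A \<longrightarrow> precompact (seminorm_top P) A)"
definition prEGP where "prEGP smul P p q \<longleftrightarrow> (\<forall>A. pq_E_limited smul P p q A \<longrightarrow> precompact (seminorm_top P) A)"
definition sGP where "sGP smul P p q \<longleftrightarrow> (\<forall>A. pq_limited smul P p q A \<longrightarrow> rel_seq_compact (seminorm_top P) A)"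
definition sEGP where "sEGP smul P p q \<longleftrightarrow> (\<forall>A. pq_E_limited smul P p q A \<longrightarrow> rel_seq_compact (seminorm_top P) A)"
definition spGP where "spGP smul P p q \<longleftrightarrow> (\<forall>A. pq_limited smul P p q A \<longrightarrow> seq_precompact P A)"
definition spEGP where "spEGP smul P p q \<longleftrightarrow> (\<forall>A. pq_E_limited smul P p q A \<longrightarrow> seq_precompact P A)"
definition bGP where "bGP smul P p q \<longleftrightarrow> (\<forall>A. pq_limited smul P p q A \<longrightarrow> precompact (strong_top smul P) A)"

end

theory Submission
  imports Defs "HOL-Computational_Algebra.Fundamental_Theorem_Algebra"
begin

text \<open>
  Under the hypotheses the nine properties coincide because the notions they are built from
  coincide.  In a barrelled space a weak\<open>\<^sup>*\<close> \<open>p\<close>-summable sequence is pointwise bounded, hence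
  equicontinuous by the uniform boundedness principle, so \<open>(p,q)\<close>-\<open>\<E>\<close>-limited and
  \<open>(p,q)\<close>-limited sets are the same.  For the compactness notions: along a free ultrafilter
  on \<open>\<nat>\<close> a sequence in a precompact set generates a Cauchy filter, whose limit (by
  completeness) is a cluster point, so angelicity makes precompact sets relatively compact; the
  Frechet--Urysohn property of compact sets extracts convergent subsequences, and completeness
  turns Cauchy subsequences into convergent ones.  Finally, precompactness for \<open>\<beta>(E,E')\<close> and
  for the original topology agree: each strong seminorm is bounded on a neighbourhood of zero by
  barrelledness, and conversely each defining seminorm \<open>p\<close> is, up to a constant factor, the
  supremum of the \<open>p\<close>-dominated continuous functionals by the Hahn--Banach theorem.  The latter
  needs the scalar field to be \<open>\<real>\<close> or a copy of \<open>\<complex>\<close>, which holds for every real normed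
  field by Cassels' elementary proof of the Gelfand--Mazur theorem.
\<close>

section \<open>Real normed fields are \<open>\<real>\<close> or \<open>\<complex>\<close>\<close>

definition real_poly_eval :: "real poly \<Rightarrow> 'a::real_normed_field \<Rightarrow> 'a" where
  "real_poly_eval g a = poly (map_poly of_real g) a"

lemma real_poly_eval_pCons[simp]: "real_poly_eval (pCons c g) a = of_real c + a * real_poly_eval g a"
  unfolding real_poly_eval_def by (simp add: map_poly_pCons)

lemma real_poly_eval_0[simp]: "real_poly_eval 0 a = 0" unfolding real_poly_eval_def by simp

lemma real_poly_eval_add[simp]: "real_poly_eval (g + h) a = real_poly_eval g a + real_poly_eval h a"
proof (induction g arbitrary: h)
  case 0 show ?case by simp
next
  case (pCons c g)
  obtain d h' where h: "h = pCons d h'" by (cases h) auto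
  show ?case using pCons.IH[of h'] unfolding h by (simp add: algebra_simps)
qed

lemma real_poly_eval_smult[simp]: "real_poly_eval (smult c h) a = of_real c * real_poly_eval h a"
  by (induction h) (simp_all add: algebra_simps)

lemma real_poly_eval_mult[simp]: "real_poly_eval (g * h) a = real_poly_eval g a * real_poly_eval h a"
  by (induction g) (simp_all add: algebra_simps)

lemma real_poly_eval_of_real: "real_poly_eval g (of_real r) = of_real (poly g r)"
  by (induction g) simp_all

lemma real_poly_eval_quadratic: "real_poly_eval [:u, -t, 1:] a = a * a - of_real t * a + of_real u"
  by (simp add: algebra_simps)

lemma real_poly_eval_diff[simp]: "real_poly_eval (g - h) a = real_poly_eval g a - real_poly_eval h a"
  using real_poly_eval_add[of "g - h" h a] by simp

lemma real_poly_eval_1[simp]: "real_poly_eval 1 a = 1"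
  by (simp add: one_pCons)

lemma real_poly_eval_power[simp]: "real_poly_eval (g ^ n) a = real_poly_eval g a ^ n"
  by (induction n) simp_all

lemma poly_degree_le_1_eq: fixes r :: "real poly" assumes "degree r \<le> 1"
  shows "r = [:coeff r 0, coeff r 1:]"
proof (rule poly_eqI)
  fix n show "coeff r n = coeff [:coeff r 0, coeff r 1:] n"
  proof (cases n)
    case (Suc k) then show ?thesis
      using assms by (cases k) (auto simp: coeff_eq_0)
  qed simp
qed

lemma real_poly_quadratic_factor_no_root:
  fixes g :: "real poly"
  assumes deg: "degree g \<ge> 1" and nr: "\<And>r. poly g r \<noteq> 0"
  shows "\<exists>t u h. g = [:u, -t, 1:] * h"
proof -
  have "degree (map_poly complex_of_real g) = degree g" by (rule degree_map_poly) simp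
  then have "\<not> constant (poly (map_poly complex_of_real g))" using deg constant_degree[of "map_poly complex_of_real g"] by auto
  then obtain z :: complex where z: "real_poly_eval g z = 0" using fundamental_theorem_of_algebra unfolding real_poly_eval_def by blast
  have Imz: "Im z \<noteq> 0"
  proof
    assume "Im z = 0"
    then have "z = of_real (Re z)" by (simp add: complex_eq_iff)
    then have "of_real (poly g (Re z)) = (0::complex)" using z real_poly_eval_of_real by metis
    then show False using nr by simp
  qed
  define q where "q = [:(Re z)^2 + (Im z)^2, - (2 * Re z), 1:]"
  have qz: "real_poly_eval q z = 0" unfolding q_def real_poly_eval_quadratic
    by (simp add: complex_eq_iff power2_eq_square algebra_simps)
  have q0: "q \<noteq> 0" unfolding q_def by simp
  have dq: "degree q = 2" unfolding q_def by simp
  define r where "r = g mod q"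
  have gq: "g = (g div q) * q + r" unfolding r_def by simp
  have "real_poly_eval r z = 0" using gq z qz by (metis real_poly_eval_add real_poly_eval_mult mult_zero_right add_0)
  have "r = 0"
  proof (rule ccontr)
    assume "r \<noteq> 0"
    then have "degree r < 2" using degree_mod_less[OF q0, of g] dq unfolding r_def by auto
    then have rf: "r = [:coeff r 0, coeff r 1:]" by (intro poly_degree_le_1_eq) auto
    have "real_poly_eval [:coeff r 0, coeff r 1:] z = 0" using \<open>real_poly_eval r z = 0\<close> rf by simp
    then have "of_real (coeff r 0) + z * of_real (coeff r 1) = (0::complex)" by simp
    then have "Im z * coeff r 1 = 0" "coeff r 0 + Re z * coeff r 1 = 0" by (simp_all add: complex_eq_iff)
    then have "coeff r 1 = 0" "coeff r 0 = 0" using Imz by auto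
    then have "r = 0" using rf by simp
    then show False using \<open>r \<noteq> 0\<close> by simp
  qed
  then have "g = q * (g div q)" using gq by (simp add: mult.commute)
  then show ?thesis unfolding q_def by blast
qed

lemma real_poly_quadratic_factor:
  fixes g :: "real poly"
  assumes deg: "degree g \<ge> 2"
  shows "\<exists>t u h. g = [:u, -t, 1:] * h"
proof (cases "\<exists>r. poly g r = 0")
  case False then show ?thesis using real_poly_quadratic_factor_no_root[of g] deg by auto
next
  case True
  then obtain r where r: "poly g r = 0" by blast
  then obtain g1 where g1: "g = [:-r, 1:] * g1" using poly_eq_0_iff_dvd dvd_def by metis
  have "g \<noteq> 0" using deg by auto
  then have "g1 \<noteq> 0" using g1 by auto
  have "degree ([:-r, 1:] * g1) = degree [:-r, 1:] + degree g1" by (rule degree_mult_eq) (use \<open>g1 \<noteq> 0\<close> in auto)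
  then have "degree g = 1 + degree g1" using g1 by simp
  then have dg1: "degree g1 \<ge> 1" using deg by simp
  show ?thesis
  proof (cases "\<exists>s. poly g1 s = 0")
    case True
    then obtain s where "poly g1 s = 0" by blast
    then obtain g2 where g2: "g1 = [:-s, 1:] * g2" using poly_eq_0_iff_dvd dvd_def by metis
    have "g = ([:-r, 1:] * [:-s, 1:]) * g2" using g1 g2 by (simp only: mult.assoc)
    also have "[:-r, 1:] * [:-s, 1:] = [:r * s, -(r + s), 1:]" by (simp add: algebra_simps)
    finally show ?thesis by blast
  next
    case False
    then obtain t u h where "g1 = [:u, -t, 1:] * h" using real_poly_quadratic_factor_no_root[OF dg1] by blast
    then have "g = [:u, -t, 1:] * ([:-r, 1:] * h)" using g1 by (simp only: ac_simps)
    then show ?thesis by blast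
  qed
qed

lemma norm_real_poly_eval_monic_even_ge:
  fixes a :: "'a::real_normed_field"
  assumes m: "0 \<le> m" and Q: "\<And>t u. m \<le> norm (a * a - of_real t * a + of_real u)"
  shows "lead_coeff g = 1 \<Longrightarrow> degree g = 2 * d \<Longrightarrow> m ^ d \<le> norm (real_poly_eval g a)"
proof (induction d arbitrary: g)
  case 0
  then have "g = [:1:]" by (metis coeff_pCons_0 degree_0_id mult_0_right)
  then show ?case by simp
next
  case (Suc d)
  then obtain t u h where gh: "g = [:u, -t, 1:] * h" using real_poly_quadratic_factor[of g] by auto
  have q0: "[:u, -t, 1:] \<noteq> 0" by simp
  have "g \<noteq> 0" using Suc.prems by auto
  then have h0: "h \<noteq> 0" using gh by auto
  have "degree g = 2 + degree h" using gh degree_mult_eq[OF q0 h0] by simp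
  then have dh: "degree h = 2 * d" using Suc.prems by simp
  have "lead_coeff h = 1" using Suc.prems(1) gh lead_coeff_mult[of "[:u, -t, 1:]" h] by simp
  then have IH: "m ^ d \<le> norm (real_poly_eval h a)" using Suc.IH dh by blast
  have "norm (real_poly_eval g a) = norm (a * a - of_real t * a + of_real u) * norm (real_poly_eval h a)"
    unfolding gh real_poly_eval_mult real_poly_eval_quadratic norm_mult ..
  also have "\<dots> \<ge> m * m ^ d" using Q IH m by (intro mult_mono) auto
  finally show ?case by simp
qed

lemma linear_injective_lower_bound:
  fixes L :: "'e::euclidean_space \<Rightarrow> 'b::real_normed_vector"
  assumes lin: "linear L" and inj: "\<And>x. L x = 0 \<Longrightarrow> x = 0"
  shows "\<exists>B>0. \<forall>x. B * norm x \<le> norm (L x)"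
proof -
  have bl: "bounded_linear L" using lin linear_conv_bounded_linear by blast
  obtain b :: 'e where b: "b \<in> Basis" using nonempty_Basis by blast
  have ne: "sphere (0::'e) 1 \<noteq> {}" using b by (auto intro!: exI[of _ b])
  have "continuous_on (sphere 0 1) (\<lambda>x. norm (L x))"
    using linear_continuous_on[OF bl] by (intro continuous_on_norm) auto
  then obtain x0 where x0: "x0 \<in> sphere 0 1" "\<And>y. y \<in> sphere 0 1 \<Longrightarrow> norm (L x0) \<le> norm (L y)"
    using continuous_attains_inf[OF compact_sphere ne] by blast
  have "x0 \<noteq> 0" using x0(1) by auto
  then have Bp: "norm (L x0) > 0" using inj by auto
  have "norm (L x0) * norm x \<le> norm (L x)" for x
  proof (cases "x = 0")
    case True then show ?thesis using linear_0[OF lin] by simp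
  next
    case False
    have "(1 / norm x) *\<^sub>R x \<in> sphere 0 1" using False by simp
    then have "norm (L x0) \<le> norm (L ((1 / norm x) *\<^sub>R x))" using x0(2) by blast
    also have "\<dots> = norm (L x) / norm x" using linear_scale[OF lin] by simp
    finally show ?thesis using False by (simp add: field_simps)
  qed
  then show ?thesis using Bp by blast
qed

lemma monic_quadratic_power_diff_factor:
  fixes q :: "real poly"
  assumes q: "degree q = 2" "lead_coeff q = 1" and n: "n \<ge> 1"
  obtains G where "q ^ n - [:e ^ n:] = (q - [:e:]) * G" "degree G = 2 * (n - 1)" "lead_coeff G = 1"
proof -
  define G where "G = (\<Sum>i<n. [:e:] ^ (n - Suc i) * q ^ i)"
  have ce: "[:e:] ^ n = [:e ^ n:]" by (induction n) simp_all
  have fac: "q ^ n - [:e ^ n:] = (q - [:e:]) * G"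
    unfolding G_def ce[symmetric] by (rule power_diff_sumr2)
  have q0: "q \<noteq> 0" using q by auto
  have dqn: "degree (q ^ n) = 2 * n" using degree_power_eq[OF q0, of n] q by simp
  have "q ^ n - [:e ^ n:] = q ^ n + (- [:e ^ n:])" by simp
  moreover have "degree (q ^ n + (- [:e ^ n:])) = degree (q ^ n)"
    by (rule degree_add_eq_left) (use dqn n in simp)
  ultimately have dD: "degree (q ^ n - [:e ^ n:]) = 2 * n" using dqn by metis
  have "coeff [:e ^ n:] (2 * n) = 0" using n by (cases "2 * n") auto
  then have lD: "lead_coeff (q ^ n - [:e ^ n:]) = 1"
    using dD dqn q lead_coeff_power[of q n] by simp
  have "q - [:e:] = q + (- [:e:])" by simp
  moreover have "degree (q + (- [:e:])) = degree q" by (rule degree_add_eq_left) (use q in simp)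
  ultimately have dqe: "degree (q - [:e:]) = 2" using q by metis
  then have lqe: "lead_coeff (q - [:e:]) = 1" using q by (simp add: numeral_2_eq_2)
  have qe0: "q - [:e:] \<noteq> 0" using dqe by auto
  have G0: "G \<noteq> 0" using lD fac by auto
  have "degree G = 2 * (n - 1)"
    using dD fac degree_mult_eq[OF qe0 G0] dqe n by simp
  moreover have "lead_coeff G = 1"
    using lD lqe unfolding fac lead_coeff_mult by simp
  ultimately show thesis using fac that by blast
qed

context
  fixes a :: "'a::real_normed_field"
begin

definition quad :: "real \<times> real \<Rightarrow> 'a" where
  "quad z = a * a - of_real (fst z) * a + of_real (snd z)"

text \<open>The trick of Cassels: at a minimiser of \<open>norm (quad z)\<close>, with minimum value \<open>m\<close> and
  \<open>b = quad (t, u)\<close>, the quotient \<open>(b ^ n - e ^ n) / (b - e)\<close> is the value at \<open>a\<close> of a monic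
  real polynomial of degree \<open>2 (n - 1)\<close>, a product of quadratics of the form \<open>quad\<close>; hence
  \<open>norm (b - e) * m ^ (n - 1) \<le> m ^ n + e ^ n\<close>, and \<open>n \<rightarrow> \<infinity>\<close> gives \<open>norm (b - e) \<le> m\<close>.\<close>
lemma quad_min_shift:
  assumes Q: "\<And>z. m \<le> norm (quad z)" and m: "m > 0" and tu: "norm (quad (t, u)) = m"
    and e: "0 < e" "e < m"
  shows "norm (quad (t, u - e)) = m"
proof -
  define b where "b = quad (t, u)"
  have bQ: "quad (t, u - e) = b - of_real e" unfolding b_def quad_def by (simp add: algebra_simps)
  have Qq: "\<And>t u. m \<le> norm (a * a - of_real t * a + of_real u)" using Q unfolding quad_def by force
  have bound: "norm (b - of_real e) * m ^ (n - 1) \<le> m ^ n + e ^ n" if n: "n \<ge> 1" for n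
  proof -
    obtain G where fac: "[:u, -t, 1:] ^ n - [:e ^ n:] = ([:u, -t, 1:] - [:e:]) * G"
      and dG: "degree G = 2 * (n - 1)" and lG: "lead_coeff G = 1"
      using monic_quadratic_power_diff_factor[of "[:u, -t, 1:]" n e] n by auto
    have Gb: "m ^ (n - 1) \<le> norm (real_poly_eval G a)"
      using norm_real_poly_eval_monic_even_ge[OF _ Qq lG dG] m by simp
    have qb: "real_poly_eval [:u, -t, 1:] a = b"
      unfolding b_def quad_def real_poly_eval_quadratic by simp
    have "(b - of_real e) * real_poly_eval G a = b ^ n - of_real e ^ n"
      using arg_cong[OF fac, of "\<lambda>g. real_poly_eval g a"]
      unfolding real_poly_eval_diff real_poly_eval_mult real_poly_eval_power qb by simp
    then have "norm (b - of_real e) * norm (real_poly_eval G a) = norm (b ^ n - of_real e ^ n)"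
      by (metis norm_mult)
    also have "\<dots> \<le> norm (b ^ n) + norm ((of_real e :: 'a) ^ n)" by (rule norm_triangle_ineq4)
    also have "\<dots> = m ^ n + e ^ n" using tu e unfolding b_def by (simp add: norm_power)
    finally show ?thesis
      using Gb by (meson mult_left_mono norm_ge_zero order_trans)
  qed
  have le: "norm (b - of_real e) \<le> m + m * (e / m) ^ n" if n: "n \<ge> 1" for n
  proof -
    have mn: "m ^ n = m * m ^ (n - 1)" using n by (cases n) auto
    have "e ^ n = m * m ^ (n - 1) * (e / m) ^ n"
      unfolding mn[symmetric] power_divide using m by simp
    then have "norm (b - of_real e) * m ^ (n - 1) \<le> (m + m * (e / m) ^ n) * m ^ (n - 1)"
      using bound[OF n] by (simp add: mn algebra_simps)
    then show ?thesis using m by (simp add: mult_le_cancel_right)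
  qed
  have "(\<lambda>n. m + m * (e / m) ^ n) \<longlonglongrightarrow> m + m * 0"
    using e m by (intro tendsto_intros) auto
  then have "norm (b - of_real e) \<le> m"
    using le by (intro LIMSEQ_le_const[of "\<lambda>n. m + m * (e / m) ^ n"]) (auto intro: exI[of _ 1])
  moreover have "m \<le> norm (b - of_real e)" using Q[of "(t, u - e)"] bQ by simp
  ultimately show ?thesis using bQ by simp
qed

lemma quad_coercive:
  assumes notreal: "\<And>r. a \<noteq> of_real r"
  obtains B where "B > 0" "\<And>z. B * norm z - norm (a * a) \<le> norm (quad z)"
proof -
  define L where "L = (\<lambda>z::real \<times> real. of_real (snd z) - of_real (fst z) * a :: 'a)"
  have linL: "linear L" unfolding L_def
    by (rule linearI) (auto simp: algebra_simps scaleR_conv_of_real)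
  have injL: "z = 0" if "L z = 0" for z
  proof (cases "fst z = 0")
    case True then show ?thesis using that unfolding L_def by (simp add: prod_eq_iff)
  next
    case False
    then have "a = of_real (snd z / fst z)" using that unfolding L_def by (simp add: field_simps)
    then show ?thesis using notreal by blast
  qed
  obtain B where B: "B > 0" "\<And>z. B * norm z \<le> norm (L z)"
    using linear_injective_lower_bound[OF linL injL] by blast
  have "quad z = a * a + L z" for z unfolding quad_def L_def by simp
  then have "B * norm z - norm (a * a) \<le> norm (quad z)" for z
    using B(2)[of z] norm_triangle_ineq2[of "L z" "- (a * a)"] by (simp add: add.commute)
  then show thesis using B(1) that by blast
qed

lemma quad_attains_min:
  assumes notreal: "\<And>r. a \<noteq> of_real r"
  obtains z0 where "\<And>z. norm (quad z0) \<le> norm (quad z)"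
proof -
  obtain B where B: "B > 0" "\<And>z. B * norm z - norm (a * a) \<le> norm (quad z)"
    using quad_coercive[OF notreal] by blast
  have contF: "continuous_on S (\<lambda>z. norm (quad z))" for S
    unfolding quad_def by (intro continuous_intros)
  define R where "R = (norm (quad 0) + norm (a * a)) / B + 1"
  have R0: "R \<ge> 0" unfolding R_def using B by (simp add: divide_nonneg_nonneg)
  then have ne: "cball (0::real \<times> real) R \<noteq> {}" by simp
  from continuous_attains_inf[OF compact_cball ne contF]
  obtain z0 where z0: "z0 \<in> cball 0 R" "\<And>y. y \<in> cball 0 R \<Longrightarrow> norm (quad z0) \<le> norm (quad y)"
    by blast
  have "norm (quad z0) \<le> norm (quad y)" for y
  proof (cases "y \<in> cball 0 R")
    case False
    then have "B * norm y > B * R" using B by (simp add: dist_norm)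
    also have "B * R = norm (quad 0) + norm (a * a) + B" unfolding R_def using B by (simp add: field_simps)
    finally have "norm (quad 0) < norm (quad y)" using B(2)[of y] B by linarith
    moreover have "norm (quad z0) \<le> norm (quad 0)" using z0(2)[of 0] R0 by simp
    ultimately show ?thesis by linarith
  qed (use z0 in blast)
  then show thesis using that by blast
qed

text \<open>Every element of a real normed field satisfies a real quadratic equation: otherwise the
  minimum of \<open>norm (quad z)\<close> is positive, and by \<open>quad_min_shift\<close> it would be attained
  along the whole unbounded ray \<open>(t, u - k e)\<close>, contradicting coercivity.\<close>
lemma real_quadratic_solvable: "\<exists>t u. a * a - of_real t * a + of_real u = 0"
proof (rule ccontr)
  assume nz: "\<not> ?thesis"
  have notreal: "a \<noteq> of_real r" for r
  proof
    assume "a = of_real r"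
    then have "a * a - of_real (2 * r) * a + of_real (r * r) = 0" by (simp add: algebra_simps)
    then show False using nz by blast
  qed
  obtain B where B: "B > 0" "\<And>z. B * norm z - norm (a * a) \<le> norm (quad z)"
    using quad_coercive[OF notreal] by blast
  obtain z0 where zmin: "\<And>z. norm (quad z0) \<le> norm (quad z)"
    using quad_attains_min[OF notreal] by blast
  obtain t0 u0 where tu0: "z0 = (t0, u0)" by (cases z0)
  define m where "m = norm (quad z0)"
  have mpos: "m > 0" unfolding m_def using nz by (simp add: quad_def)
  define e where "e = m / 2"
  have e: "0 < e" "e < m" unfolding e_def using mpos by auto
  have ray: "norm (quad (t0, u0 - real k * e)) = m" for k
  proof (induction k)
    case 0 then show ?case unfolding m_def tu0 by simp
  next
    case (Suc k)
    have "norm (quad (t0, u0 - real k * e - e)) = m"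
      using quad_min_shift[OF _ mpos Suc e] zmin unfolding m_def by blast
    then show ?case by (simp add: algebra_simps)
  qed
  obtain k :: nat where k: "((m + norm (a * a)) / B + \<bar>u0\<bar>) / e < real k"
    using reals_Archimedean2 by blast
  have "\<bar>u0 - real k * e\<bar> \<le> norm (t0, u0 - real k * e)"
    by (metis norm_snd_le real_norm_def snd_conv)
  then have "(m + norm (a * a)) / B < norm (t0, u0 - real k * e)"
    using k e by (simp add: field_simps)
  then have "m + norm (a * a) < B * norm (t0, u0 - real k * e)" using B by (simp add: field_simps)
  then show False using B(2)[of "(t0, u0 - real k * e)"] ray[of k] by linarith
qed

end

lemma square_eq_nonneg_real_imp_real:
  fixes x :: "'a::real_normed_field"
  assumes "x * x = of_real D" "D \<ge> 0"
  shows "\<exists>r. x = of_real r"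
proof -
  have "sqrt D * sqrt D = D" using assms(2) by simp
  then have "of_real (sqrt D) * of_real (sqrt D) = (of_real D :: 'a)"
    by (simp only: of_real_mult[symmetric])
  then have "x * x = of_real (sqrt D) * of_real (sqrt D)" using assms(1) by simp
  then have "x = of_real (sqrt D) \<or> x = - of_real (sqrt D)" by (simp add: square_eq_iff)
  then show ?thesis
  proof
    assume "x = of_real (sqrt D)" then show ?thesis by blast
  next
    assume "x = - of_real (sqrt D)" then have "x = of_real (- sqrt D)" by simp
    then show ?thesis by blast
  qed
qed

lemma imaginary_unit_not_real:
  fixes j :: "'a::real_normed_field"
  assumes "j * j = -1"
  shows "j \<noteq> of_real x"
proof
  assume "j = of_real x"
  then have "of_real (x * x) = (of_real (-1) :: 'a)" using assms by simp
  then have "x * x = -1" using of_real_eq_iff by blast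
  moreover have "x * x \<ge> 0" by simp
  ultimately show False by linarith
qed

lemma real_or_imaginary_form:
  fixes c :: "'a::real_normed_field"
  shows "(\<exists>r. c = of_real r) \<or> (\<exists>r s k. k * k = -1 \<and> c = of_real r + of_real s * k)"
proof -
  obtain t u where tu: "c * c - of_real t * c + of_real u = 0" using real_quadratic_solvable by blast
  define w where "w = c - of_real (t / 2)"
  define D where "D = t * t / 4 - u"
  have ww: "w * w = of_real D"
  proof -
    have cc: "c * c = of_real t * c - of_real u" using tu by (simp add: algebra_simps)
    have "w * w = c * c - of_real t * c + of_real (t * t / 4)"
      unfolding w_def by (simp add: algebra_simps of_real_mult[symmetric] del: of_real_mult)
    also have "\<dots> = of_real D" unfolding cc D_def by (simp add: algebra_simps)
    finally show ?thesis .
  qed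
  show ?thesis
  proof (cases "D \<ge> 0")
    case True
    then obtain r where "w = of_real r" using square_eq_nonneg_real_imp_real[OF ww] by blast
    then have "c = of_real (r + t / 2)" unfolding w_def by (simp add: algebra_simps)
    then show ?thesis by blast
  next
    case False
    define sd where "sd = sqrt (- D)"
    have sd: "sd > 0" "sd * sd = - D" using False unfolding sd_def by auto
    define k where "k = w / of_real sd"
    have "k * k = (w * w) / (of_real sd * of_real sd)" unfolding k_def by (simp add: field_simps)
    also have "\<dots> = of_real D / of_real (- D)" unfolding ww of_real_mult[symmetric] sd(2) ..
    also have "\<dots> = -1" using False by (simp add: of_real_minus)
    finally have kk: "k * k = -1" .
    have "c = of_real (t / 2) + of_real sd * k" unfolding k_def w_def using sd by simp
    then show ?thesis using kk by blast
  qed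
qed

lemma real_normed_field_real_or_complex:
  "(\<forall>c::'a::real_normed_field. \<exists>r. c = of_real r) \<or>
   (\<exists>j::'a. j * j = -1 \<and> (\<forall>c. \<exists>r s. c = of_real r + of_real s * j))"
proof (cases "\<forall>c::'a. \<exists>r. c = of_real r")
  case True then show ?thesis by blast
next
  case False
  then obtain a :: 'a where "\<forall>r. a \<noteq> of_real r" by blast
  then obtain j :: 'a where j: "j * j = -1" using real_or_imaginary_form[of a] by blast
  have "\<forall>c::'a. \<exists>r s. c = of_real r + of_real s * j"
  proof
    fix c :: 'a
    show "\<exists>r s. c = of_real r + of_real s * j"
    proof (cases "\<exists>r. c = of_real r")
      case True
      then obtain r where "c = of_real r" by blast
      then have "c = of_real r + of_real 0 * j" by simp
      then show ?thesis by blast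
    next
      case False
      then obtain r s k where k: "k * k = -1" "c = of_real r + of_real s * k" using real_or_imaginary_form[of c] by blast
      then have "k * k = j * j" using j by simp
      then have "k = j \<or> k = - j" by (simp add: square_eq_iff)
      then show ?thesis
      proof
        assume "k = j" then show ?thesis using k by blast
      next
        assume "k = - j" then have "c = of_real r + of_real (- s) * j" using k by simp
        then show ?thesis by blast
      qed
    qed
  qed
  then show ?thesis using j by blast
qed

lemma norm_real_part_lower_bound:
  fixes j :: "'a::real_normed_field"
  assumes j: "j * j = -1"
  shows "\<exists>C>0. \<forall>r s. C * \<bar>r\<bar> \<le> norm (of_real r + of_real s * j)"
proof -
  define L where "L = (\<lambda>z::real \<times> real. of_real (fst z) + of_real (snd z) * j)"
  have linL: "linear L" unfolding L_def
    by (rule linearI) (auto simp: algebra_simps scaleR_conv_of_real)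
  have injL: "z = 0" if "L z = 0" for z
  proof (cases "snd z = 0")
    case True then show ?thesis using that unfolding L_def by (simp add: prod_eq_iff)
  next
    case False
    have "of_real (fst z) + of_real (snd z) * j = 0" using that unfolding L_def by simp
    then have "of_real (snd z) * j = - of_real (fst z)" by (simp add: eq_neg_iff_add_eq_0 add.commute)
    moreover have "(of_real (snd z) :: 'a) \<noteq> 0" using False by simp
    ultimately have "j = - of_real (fst z) / of_real (snd z)" by (metis nonzero_mult_div_cancel_left)
    then have "j = of_real (- fst z / snd z)" by simp
    then show ?thesis using imaginary_unit_not_real[OF j] by blast
  qed
  obtain C where C: "C > 0" "\<And>z. C * norm z \<le> norm (L z)" using linear_injective_lower_bound[OF linL injL] by blast
  have "C * \<bar>r\<bar> \<le> norm (of_real r + of_real s * j)" for r s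
  proof -
    have "\<bar>r\<bar> \<le> norm (r, s)" by (metis fst_conv norm_fst_le real_norm_def)
    then have "C * \<bar>r\<bar> \<le> C * norm (r, s)" using C by simp
    also have "\<dots> \<le> norm (L (r, s))" by (rule C(2))
    finally show ?thesis unfolding L_def by simp
  qed
  then show ?thesis using C by blast
qed

lemma of_real_minus_imaginary_eq_of_real:
  fixes j :: "'a::real_normed_field"
  assumes j: "j * j = -1" and eq: "of_real a - j * of_real b = of_real c"
  shows "b = 0 \<and> a = c"
proof -
  have "j * of_real b = of_real (a - c)" using eq by (simp add: algebra_simps)
  have b: "b = 0"
  proof (rule ccontr)
    assume "b \<noteq> 0"
    then have "(of_real b :: 'a) \<noteq> 0" by simp
    then have "j = of_real (a - c) / of_real b" using \<open>j * of_real b = of_real (a - c)\<close>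
      by (metis nonzero_mult_div_cancel_right)
    then have "j = of_real ((a - c) / b)" by simp
    then show False using imaginary_unit_not_real[OF j] by blast
  qed
  then show ?thesis using eq by simp
qed

section \<open>Free ultrafilters on \<open>\<nat>\<close>\<close>

definition free_filter :: "nat set set \<Rightarrow> bool" where
  "free_filter M \<longleftrightarrow> (\<forall>X\<in>M. \<forall>Y. X \<subseteq> Y \<longrightarrow> Y \<in> M) \<and> (\<forall>X\<in>M. \<forall>Y\<in>M. X \<inter> Y \<in> M) \<and> {} \<notin> M
     \<and> (\<forall>X. finite (- X) \<longrightarrow> X \<in> M)"

lemma free_filter_mono: "free_filter M \<Longrightarrow> X \<in> M \<Longrightarrow> X \<subseteq> Y \<Longrightarrow> Y \<in> M" unfolding free_filter_def by blast
lemma free_filter_Int: "free_filter M \<Longrightarrow> X \<in> M \<Longrightarrow> Y \<in> M \<Longrightarrow> X \<inter> Y \<in> M" unfolding free_filter_def by blast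
lemma free_filter_empty: "free_filter M \<Longrightarrow> {} \<notin> M" unfolding free_filter_def by blast
lemma free_filter_cofinite: "free_filter M \<Longrightarrow> finite (- X) \<Longrightarrow> X \<in> M" unfolding free_filter_def by blast
lemma free_filter_UNIV: "free_filter M \<Longrightarrow> UNIV \<in> M" using free_filter_cofinite[of M UNIV] by simp
lemma free_filterI:
  assumes "\<And>X Y. X \<in> M \<Longrightarrow> X \<subseteq> Y \<Longrightarrow> Y \<in> M" "\<And>X Y. X \<in> M \<Longrightarrow> Y \<in> M \<Longrightarrow> X \<inter> Y \<in> M" "{} \<notin> M"
    "\<And>X. finite (- X) \<Longrightarrow> X \<in> M"
  shows "free_filter M" unfolding free_filter_def using assms by blast

lemma free_filter_cofinite_sets: "free_filter {X. finite (- X)}"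
proof (rule free_filterI)
  fix X Y :: "nat set" assume "X \<in> {X. finite (- X)}" "X \<subseteq> Y"
  then show "Y \<in> {X. finite (- X)}" by (auto intro: finite_subset)
next
  fix X Y :: "nat set" assume "X \<in> {X. finite (- X)}" "Y \<in> {X. finite (- X)}"
  then show "X \<inter> Y \<in> {X. finite (- X)}" by auto
qed auto

lemma free_filter_Union_chain:
  assumes C: "subset.chain {M. free_filter M} C" and ne: "C \<noteq> {}"
  shows "free_filter (\<Union>C)"
proof (rule free_filterI)
  have CC: "\<And>X. X \<in> C \<Longrightarrow> free_filter X" and tot: "\<And>X Y. X \<in> C \<Longrightarrow> Y \<in> C \<Longrightarrow> X \<subseteq> Y \<or> Y \<subseteq> X"
    using C unfolding subset.chain_def by auto
  fix X Y assume X: "X \<in> \<Union>C" and Y: "Y \<in> \<Union>C"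
  then obtain M1 M2 where M: "M1 \<in> C" "M2 \<in> C" "X \<in> M1" "Y \<in> M2" by blast
  show "X \<inter> Y \<in> \<Union>C"
  proof (cases "M1 \<subseteq> M2")
    case True
    then show ?thesis using M free_filter_Int[OF CC[OF M(2)]] by blast
  next
    case False
    then have "M2 \<subseteq> M1" using tot M by blast
    then show ?thesis using M free_filter_Int[OF CC[OF M(1)]] by blast
  qed
next
  have CC: "\<And>X. X \<in> C \<Longrightarrow> free_filter X" using C unfolding subset.chain_def by auto
  fix X Y assume "X \<in> \<Union>C" "X \<subseteq> Y"
  then show "Y \<in> \<Union>C" using free_filter_mono[OF CC] by blast
next
  have CC: "\<And>X. X \<in> C \<Longrightarrow> free_filter X" using C unfolding subset.chain_def by auto
  show "{} \<notin> \<Union>C" using free_filter_empty[OF CC] by blast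
next
  have CC: "\<And>X. X \<in> C \<Longrightarrow> free_filter X" using C unfolding subset.chain_def by auto
  fix X :: "nat set" assume X: "finite (- X)"
  obtain M where "M \<in> C" using ne by blast
  then show "X \<in> \<Union>C" using free_filter_cofinite[OF CC X] by blast
qed

lemma maximal_free_filter_ultra:
  assumes M: "free_filter M" and max: "\<And>X. free_filter X \<Longrightarrow> M \<subseteq> X \<Longrightarrow> X = M"
  shows "X \<in> M \<or> - X \<in> M"
proof (rule ccontr)
  assume nX: "\<not> (X \<in> M \<or> - X \<in> M)"
  define M' where "M' = {Y. \<exists>Z\<in>M. Z \<inter> X \<subseteq> Y}"
  have "free_filter M'"
  proof (rule free_filterI)
    fix Y Y' assume "Y \<in> M'" "Y \<subseteq> Y'" then show "Y' \<in> M'" unfolding M'_def by blast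
  next
    fix Y1 Y2 assume "Y1 \<in> M'" "Y2 \<in> M'"
    then obtain Z1 Z2 where Z: "Z1 \<in> M" "Z2 \<in> M" "Z1 \<inter> X \<subseteq> Y1" "Z2 \<inter> X \<subseteq> Y2" unfolding M'_def by blast
    then have "Z1 \<inter> Z2 \<in> M" "(Z1 \<inter> Z2) \<inter> X \<subseteq> Y1 \<inter> Y2" using free_filter_Int[OF M] by blast+
    then show "Y1 \<inter> Y2 \<in> M'" unfolding M'_def by blast
  next
    show "{} \<notin> M'"
    proof
      assume "{} \<in> M'"
      then obtain Z where "Z \<in> M" "Z \<subseteq> - X" unfolding M'_def by blast
      then show False using nX free_filter_mono[OF M] by blast
    qed
  next
    fix Y :: "nat set" assume "finite (- Y)"
    then show "Y \<in> M'" using free_filter_cofinite[OF M] unfolding M'_def by blast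
  qed
  moreover have "M \<subseteq> M'" unfolding M'_def by blast
  ultimately have "M' = M" using max by blast
  moreover have "X \<in> M'" unfolding M'_def using free_filter_UNIV[OF M] by blast
  ultimately show False using nX by blast
qed

lemma free_ultrafilter_exists: "\<exists>M. free_filter M \<and> (\<forall>X. X \<in> M \<or> - X \<in> M)"
proof -
  have "\<exists>M\<in>{M. free_filter M}. \<forall>X\<in>{M. free_filter M}. M \<subseteq> X \<longrightarrow> X = M"
  proof (rule subset_Zorn)
    fix C assume C: "subset.chain {M. free_filter M} C"
    show "\<exists>U\<in>{M. free_filter M}. \<forall>X\<in>C. X \<subseteq> U"
    proof (cases "C = {}")
      case True then show ?thesis using free_filter_cofinite_sets by blast
    next
      case False then show ?thesis using free_filter_Union_chain[OF C] by blast
    qed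
  qed
  then obtain M where M: "free_filter M" and max: "\<And>X. free_filter X \<Longrightarrow> M \<subseteq> X \<Longrightarrow> X = M"
    by blast
  then show ?thesis using maximal_free_filter_ultra[OF M max] by blast
qed

lemma ultrafilter_finite_Union:
  assumes M: "free_filter M" "\<forall>X. X \<in> M \<or> - X \<in> M" and I: "finite I"
  shows "(\<Union>i\<in>I. B i) \<in> M \<Longrightarrow> \<exists>i\<in>I. B i \<in> M"
  using I
proof (induction I rule: finite_induct)
  case empty then show ?case using free_filter_empty[OF M(1)] by simp
next
  case (insert a I)
  show ?case
  proof (cases "B a \<in> M")
    case True then show ?thesis by blast
  next
    case False
    then have "- B a \<in> M" using M(2) by blast
    then have "(\<Union>i\<in>insert a I. B i) \<inter> - B a \<in> M" using free_filter_Int[OF M(1) insert.prems] by blast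
    moreover have "(\<Union>i\<in>insert a I. B i) \<inter> - B a \<subseteq> (\<Union>i\<in>I. B i)" by blast
    ultimately have "(\<Union>i\<in>I. B i) \<in> M" using free_filter_mono[OF M(1)] by blast
    then show ?thesis using insert.IH by blast
  qed
qed

definition seq_ultrafilter :: "nat set set \<Rightarrow> (nat \<Rightarrow> 'a) \<Rightarrow> 'a filter" where
  "seq_ultrafilter M s = Abs_filter (\<lambda>Q. {n. Q (s n)} \<in> M)"

lemma eventually_seq_ultrafilter:
  assumes M: "free_filter M"
  shows "eventually Q (seq_ultrafilter M s) \<longleftrightarrow> {n. Q (s n)} \<in> M"
proof -
  have "is_filter (\<lambda>Q. {n. Q (s n)} \<in> M)"
  proof
    show "{n. True} \<in> M" using free_filter_UNIV[OF M] by simp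
  next
    fix P1 P2 :: "'a \<Rightarrow> bool" assume "{n. P1 (s n)} \<in> M" "{n. P2 (s n)} \<in> M"
    then have "{n. P1 (s n)} \<inter> {n. P2 (s n)} \<in> M" by (rule free_filter_Int[OF M])
    then show "{n. P1 (s n) \<and> P2 (s n)} \<in> M" by (simp add: Collect_conj_eq)
  next
    fix P1 P2 :: "'a \<Rightarrow> bool" assume "\<forall>x. P1 x \<longrightarrow> P2 x" "{n. P1 (s n)} \<in> M"
    then show "{n. P2 (s n)} \<in> M" by (auto elim!: free_filter_mono[OF M])
  qed
  then show ?thesis unfolding seq_ultrafilter_def by (rule eventually_Abs_filter)
qed

section \<open>Spaces defined by seminorms\<close>

definition seminorm_ball :: "('v::ab_group_add \<Rightarrow> real) set \<Rightarrow> real \<Rightarrow> 'v \<Rightarrow> 'v set" where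
  "seminorm_ball Q e x = {y. \<forall>p\<in>Q. p (y - x) < e}"

lemma openin_seminorm_top: "openin (seminorm_top P') U \<longleftrightarrow> (\<forall>x\<in>U. \<exists>Q e. finite Q \<and> Q \<subseteq> P' \<and> e > 0 \<and> seminorm_ball Q e x \<subseteq> U)"
  unfolding seminorm_top_def seminorm_ball_def
  using topology_inverse'[OF istopology_seminorm_top[of P']] by simp

lemma openin_seminorm_top_seminorm_ball:
  assumes "finite Q" "Q \<subseteq> P'" and tri: "\<And>p a b. p \<in> Q \<Longrightarrow> p (a + b) \<le> p a + p b"
  shows "openin (seminorm_top P') (seminorm_ball Q e x)"
  unfolding openin_seminorm_top
proof
  fix y assume y: "y \<in> seminorm_ball Q e x"
  show "\<exists>Q' e'. finite Q' \<and> Q' \<subseteq> P' \<and> e' > 0 \<and> seminorm_ball Q' e' y \<subseteq> seminorm_ball Q e x"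
  proof (cases "Q = {}")
    case True then show ?thesis by (auto simp: seminorm_ball_def intro!: exI[of _ "{}"] exI[of _ 1])
  next
    case False
    define d where "d = e - Max ((\<lambda>p. p (y - x)) ` Q)"
    have "Max ((\<lambda>p. p (y - x)) ` Q) \<in> (\<lambda>p. p (y - x)) ` Q" using False assms by simp
    then have dpos: "d > 0" using y unfolding d_def seminorm_ball_def by auto
    have "seminorm_ball Q d y \<subseteq> seminorm_ball Q e x"
    proof
      fix z assume z: "z \<in> seminorm_ball Q d y"
      show "z \<in> seminorm_ball Q e x"
      proof (unfold seminorm_ball_def, intro CollectI ballI)
        fix p assume p: "p \<in> Q"
        have "p (y - x) \<le> Max ((\<lambda>p. p (y - x)) ` Q)" using p assms by simp
        moreover have "p (z - x) \<le> p (z - y) + p (y - x)" using tri[OF p, of "z - y" "y - x"] by simp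
        moreover have "p (z - y) < d" using z p unfolding seminorm_ball_def by auto
        ultimately show "p (z - x) < e" unfolding d_def by linarith
      qed
    qed
    then show ?thesis using dpos assms by blast
  qed
qed

locale lcs_space =
  fixes smul :: "'k::{real_normed_field,banach} \<Rightarrow> 'v::ab_group_add \<Rightarrow> 'v"
    and P :: "('v \<Rightarrow> real) set"
  assumes lcs: "lcs smul P"
begin

sublocale vs: vector_space smul using lcs unfolding lcs_def by auto

abbreviation "T \<equiv> seminorm_top P"

lemma openin_T_iff: "openin T U \<longleftrightarrow> (\<forall>x\<in>U. \<exists>Q e. finite Q \<and> Q \<subseteq> P \<and> e > 0 \<and> seminorm_ball Q e x \<subseteq> U)"
  by (rule openin_seminorm_top)

lemma topspace_T[simp]: "topspace T = UNIV"
proof -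
  have "openin T UNIV" unfolding openin_T_iff by (auto simp: seminorm_ball_def intro!: exI[of _ "{}"] exI[of _ 1])
  then show ?thesis using openin_subset by blast
qed

lemma seminorm: "p \<in> P \<Longrightarrow> is_seminorm smul p" using lcs unfolding lcs_def by auto

lemma seminorm_triangle: "p \<in> P \<Longrightarrow> p (x + y) \<le> p x + p y" using seminorm unfolding is_seminorm_def by auto
lemma seminorm_scale: "p \<in> P \<Longrightarrow> p (smul c x) = norm c * p x" using seminorm unfolding is_seminorm_def by auto
lemma seminorm_0[simp]: "p \<in> P \<Longrightarrow> p 0 = 0" using seminorm_scale[of p 0 0] by simp
lemma seminorm_minus: "p \<in> P \<Longrightarrow> p (- x) = p x" using seminorm_scale[of p "-1" x] by simp
lemma seminorm_nonneg: "p \<in> P \<Longrightarrow> p x \<ge> 0"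
  using seminorm_triangle[of p x "-x"] seminorm_minus[of p x] by simp
lemma seminorm_minus_commute: "p \<in> P \<Longrightarrow> p (x - y) = p (y - x)" using seminorm_minus[of p "x - y"] by simp
lemma seminorm_diff_triangle: "p \<in> P \<Longrightarrow> p (x - z) \<le> p (x - y) + p (y - z)"
  using seminorm_triangle[of p "x - y" "y - z"] by simp
lemma seminorms_separate: "x \<noteq> 0 \<Longrightarrow> \<exists>p\<in>P. p x \<noteq> 0" using lcs unfolding lcs_def by auto

lemma openin_seminorm_ball: assumes "finite Q" "Q \<subseteq> P" shows "openin T (seminorm_ball Q e x)"
  using openin_seminorm_top_seminorm_ball[OF assms] seminorm_triangle assms by blast

lemma centre_in_seminorm_ball: "e > 0 \<Longrightarrow> Q \<subseteq> P \<Longrightarrow> x \<in> seminorm_ball Q e x"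
  by (auto simp: seminorm_ball_def)

lemma limitin_T_iff: "limitin T f l F \<longleftrightarrow> (\<forall>p\<in>P. \<forall>e>0. eventually (\<lambda>n. p (f n - l) < e) F)"
proof
  assume L: "limitin T f l F"
  show "\<forall>p\<in>P. \<forall>e>0. eventually (\<lambda>n. p (f n - l) < e) F"
  proof (intro ballI allI impI)
    fix p e assume "p \<in> P" "(e::real) > 0"
    then have "openin T (seminorm_ball {p} e l)" "l \<in> seminorm_ball {p} e l"
      using openin_seminorm_ball[of "{p}"] centre_in_seminorm_ball[of e "{p}"] by auto
    then have "eventually (\<lambda>n. f n \<in> seminorm_ball {p} e l) F" using L unfolding limitin_def by blast
    then show "eventually (\<lambda>n. p (f n - l) < e) F" by (auto simp: seminorm_ball_def elim: eventually_mono)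
  qed
next
  assume R: "\<forall>p\<in>P. \<forall>e>0. eventually (\<lambda>n. p (f n - l) < e) F"
  show "limitin T f l F" unfolding limitin_def
  proof (intro conjI allI impI)
    show "l \<in> topspace T" by simp
    fix U assume "openin T U \<and> l \<in> U"
    then obtain Q e where Q: "finite Q" "Q \<subseteq> P" "e > 0" "seminorm_ball Q e l \<subseteq> U" using openin_T_iff by meson
    have "eventually (\<lambda>n. \<forall>p\<in>Q. p (f n - l) < e) F"
      using Q R by (intro eventually_ball_finite) auto
    then show "eventually (\<lambda>n. f n \<in> U) F"
      by (rule eventually_mono) (use Q in \<open>auto simp: seminorm_ball_def\<close>)
  qed
qed

end

section \<open>Compactness notions\<close>

lemma precompact_finer_nhds:
  assumes A: "precompact T A"
    and nhds: "\<And>W. openin T' W \<Longrightarrow> 0 \<in> W \<Longrightarrow> \<exists>V. openin T V \<and> 0 \<in> V \<and> V \<subseteq> W"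
  shows "precompact T' A"
  unfolding precompact_def
proof (intro allI impI)
  fix W assume "openin T' W \<and> 0 \<in> W"
  then obtain V where V: "openin T V" "0 \<in> V" "V \<subseteq> W" using nhds by blast
  then obtain F where F: "finite F" "A \<subseteq> (\<Union>f\<in>F. (\<lambda>u. f + u) ` V)"
    using A unfolding precompact_def by meson
  have "(\<Union>f\<in>F. (\<lambda>u. f + u) ` V) \<subseteq> (\<Union>f\<in>F. (\<lambda>u. f + u) ` W)"
    by (rule UN_mono) (use V(3) in auto)
  with F(2) have "A \<subseteq> (\<Union>f\<in>F. (\<lambda>u. f + u) ` W)" by (rule order_trans)
  then show "\<exists>F. finite F \<and> A \<subseteq> (\<Union>f\<in>F. (\<lambda>u. f + u) ` W)" using F(1) by blast
qed

lemma strict_mono_subseq_of_unbounded: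
  fixes f :: "nat \<Rightarrow> nat"
  assumes "\<And>N. \<exists>K. \<forall>k\<ge>K. N \<le> f k"
  shows "\<exists>r::nat\<Rightarrow>nat. strict_mono r \<and> strict_mono (f \<circ> r)"
proof -
  have ex: "\<exists>k. k > n \<and> f k > f n" for n
  proof -
    obtain K where K: "\<forall>k\<ge>K. Suc (f n) \<le> f k" using assms by blast
    show ?thesis using K[rule_format, of "max K (Suc n)"] by (intro exI[of _ "max K (Suc n)"]) auto
  qed
  define nxt where "nxt n = (SOME k. k > n \<and> f k > f n)" for n
  have nxt: "nxt n > n \<and> f (nxt n) > f n" for n unfolding nxt_def using someI_ex[OF ex] by blast
  define r where "r n = (nxt ^^ n) 0" for n
  have rS: "r (Suc n) = nxt (r n)" for n unfolding r_def by simp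
  have "strict_mono r" unfolding strict_mono_Suc_iff using nxt rS by simp
  moreover have "strict_mono (f \<circ> r)" unfolding strict_mono_Suc_iff using nxt rS by simp
  ultimately show ?thesis by blast
qed

context lcs_space
begin

lemma openin_translation: assumes "openin T U" shows "openin T ((\<lambda>u. f + u) ` U)"
  unfolding openin_T_iff
proof
  fix y assume "y \<in> (\<lambda>u. f + u) ` U"
  then obtain u where u: "u \<in> U" "y = f + u" by auto
  then obtain Q e where Q: "finite Q" "Q \<subseteq> P" "e > 0" "seminorm_ball Q e u \<subseteq> U" using assms openin_T_iff by meson
  have "seminorm_ball Q e y \<subseteq> (\<lambda>u. f + u) ` U"
  proof
    fix z assume "z \<in> seminorm_ball Q e y"
    then have "z - f \<in> seminorm_ball Q e u" using u by (simp add: seminorm_ball_def algebra_simps)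
    then have "z - f \<in> U" using Q by auto
    then show "z \<in> (\<lambda>u. f + u) ` U" by (auto intro: image_eqI[of _ _ "z - f"])
  qed
  then show "\<exists>Q e. finite Q \<and> Q \<subseteq> P \<and> e > 0 \<and> seminorm_ball Q e y \<subseteq> (\<lambda>u. f + u) ` U" using Q by blast
qed

lemma rel_compact_imp_precompact: assumes "rel_compact T A" shows "precompact T A"
  unfolding precompact_def
proof (intro allI impI)
  fix U assume U: "openin T U \<and> 0 \<in> U"
  define K where "K = T closure_of A"
  have K: "compactin T K" using assms unfolding rel_compact_def K_def by simp
  have AK: "A \<subseteq> K" unfolding K_def by (simp add: closure_of_subset)
  have "K \<subseteq> \<Union>((\<lambda>f. (\<lambda>u. f + u) ` U) ` K)"
    using U by (auto intro!: bexI image_eqI[of _ _ 0])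
  moreover have "\<forall>V\<in>(\<lambda>f. (\<lambda>u. f + u) ` U) ` K. openin T V" using U openin_translation by auto
  ultimately obtain \<F> where F: "finite \<F>" "\<F> \<subseteq> (\<lambda>f. (\<lambda>u. f + u) ` U) ` K" "K \<subseteq> \<Union>\<F>"
    using K unfolding compactin_def by meson
  then obtain C where C: "C \<subseteq> K" "finite C" "\<F> = (\<lambda>f. (\<lambda>u. f + u) ` U) ` C"
    by (meson finite_subset_image)
  show "\<exists>F. finite F \<and> A \<subseteq> (\<Union>f\<in>F. (\<lambda>u. f + u) ` U)"
    using C F AK by (intro exI[of _ C]) auto
qed

lemma subseq_limit_imp_cluster_point:
  assumes "strict_mono r" "limitin T (s \<circ> r) l sequentially"
  shows "cluster_point_seq T s l"
  unfolding cluster_point_seq_def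
proof (intro conjI allI impI)
  show "l \<in> topspace T" by simp
  fix U assume U: "openin T U \<and> l \<in> U"
  then have ev: "eventually (\<lambda>n. s (r n) \<in> U) sequentially" using assms(2) unfolding limitin_def by auto
  show "\<exists>\<^sub>F n in sequentially. s n \<in> U"
  proof (rule ccontr)
    assume "\<not> (\<exists>\<^sub>F n in sequentially. s n \<in> U)"
    then have "eventually (\<lambda>n. s n \<notin> U) sequentially" by (simp add: not_frequently)
    then have "eventually (\<lambda>n. s (r n) \<notin> U) sequentially" using eventually_subseq[OF assms(1)] by blast
    with ev have "eventually (\<lambda>n. False) sequentially" by (rule eventually_elim2) auto
    then show False by simp
  qed
qed

lemma rel_seq_compact_imp_rel_compact:
  assumes ang: "angelic T" and A: "rel_seq_compact T A"
  shows "rel_compact T A"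
proof -
  have "rel_countably_compact T A"
    unfolding rel_countably_compact_def
  proof (intro conjI allI impI)
    show "A \<subseteq> topspace T" by simp
    fix s :: "nat \<Rightarrow> 'v" assume "range s \<subseteq> A"
    then obtain r l where "strict_mono r" "limitin T (s \<circ> r) l sequentially"
      using A unfolding rel_seq_compact_def by blast
    then show "\<exists>x. cluster_point_seq T s x" using subseq_limit_imp_cluster_point by blast
  qed
  then show ?thesis using ang unfolding angelic_def by blast
qed

lemma rel_seq_compact_imp_seq_precompact:
  assumes A: "rel_seq_compact T A" shows "seq_precompact P A"
  unfolding seq_precompact_def
proof (intro allI impI)
  fix s :: "nat \<Rightarrow> 'v" assume "range s \<subseteq> A"
  then obtain r l where r: "strict_mono r" "limitin T (s \<circ> r) l sequentially"
    using A unfolding rel_seq_compact_def by blast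
  have "cauchy_seq_sn P (s \<circ> r)"
    unfolding cauchy_seq_sn_def
  proof (intro ballI allI impI)
    fix p and e :: real assume p: "p \<in> P" and e: "e > 0"
    have "eventually (\<lambda>n. p ((s \<circ> r) n - l) < e/2) sequentially"
      using r(2) p e unfolding limitin_T_iff by (meson half_gt_zero)
    then obtain N where N: "\<And>n. n \<ge> N \<Longrightarrow> p ((s \<circ> r) n - l) < e/2"
      unfolding eventually_sequentially by blast
    show "\<exists>N. \<forall>m\<ge>N. \<forall>n\<ge>N. p ((s \<circ> r) m - (s \<circ> r) n) < e"
    proof (intro exI allI impI)
      fix m n assume "m \<ge> N" "n \<ge> N"
      moreover have "p ((s \<circ> r) m - (s \<circ> r) n) \<le> p ((s \<circ> r) m - l) + p (l - (s \<circ> r) n)"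
        using p seminorm_diff_triangle by blast
      moreover have "p (l - (s \<circ> r) n) = p ((s \<circ> r) n - l)" using p seminorm_minus_commute by blast
      moreover have "p ((s \<circ> r) m - l) < e/2" "p ((s \<circ> r) n - l) < e/2" using N calculation by auto
      ultimately show "p ((s \<circ> r) m - (s \<circ> r) n) < e" by linarith
    qed
  qed
  then show "\<exists>r. strict_mono r \<and> cauchy_seq_sn P (s \<circ> r)" using r by blast
qed

lemma complete_lcs_cauchy_seq_converges:
  assumes C: "complete_lcs P" and t: "cauchy_seq_sn P t"
  shows "\<exists>l. limitin T t l sequentially"
proof -
  have "cauchy_filter_sn P (filtermap t sequentially)"
    unfolding cauchy_filter_sn_def
  proof (intro conjI ballI allI impI)
    show "filtermap t sequentially \<noteq> bot" by (simp add: filtermap_bot_iff)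
    fix p and e :: real assume p: "p \<in> P" and e: "e > 0"
    then obtain N where N: "\<forall>m\<ge>N. \<forall>n\<ge>N. p (t m - t n) < e" using t unfolding cauchy_seq_sn_def by blast
    show "\<exists>A. eventually (\<lambda>x. x \<in> A) (filtermap t sequentially) \<and> (\<forall>x\<in>A. \<forall>y\<in>A. p (x - y) < e)"
      using N by (intro exI[of _ "t ` {N..}"]) (auto simp: eventually_filtermap eventually_sequentially)
  qed
  then obtain l where "limitin T (\<lambda>x. x) l (filtermap t sequentially)" using C unfolding complete_lcs_def by blast
  then have "limitin T t l sequentially" by (simp add: limitin_def eventually_filtermap)
  then show ?thesis by blast
qed

lemma seq_precompact_imp_rel_seq_compact:
  assumes C: "complete_lcs P" and A: "seq_precompact P A" shows "rel_seq_compact T A"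
  unfolding rel_seq_compact_def
proof (intro allI impI)
  fix s :: "nat \<Rightarrow> 'v" assume "range s \<subseteq> A"
  then obtain r where r: "strict_mono r" "cauchy_seq_sn P (s \<circ> r)" using A unfolding seq_precompact_def by blast
  then show "\<exists>r l. strict_mono r \<and> limitin T (s \<circ> r) l sequentially"
    using complete_lcs_cauchy_seq_converges[OF C r(2)] by blast
qed

lemma compactin_seq_cluster_point:
  assumes K: "compactin T K" and s: "range s \<subseteq> K"
  shows "\<exists>x\<in>K. cluster_point_seq T s x"
proof (rule ccontr)
  assume "\<not> ?thesis"
  then have "\<forall>x\<in>K. \<exists>U. openin T U \<and> x \<in> U \<and> eventually (\<lambda>n. s n \<notin> U) sequentially"
    unfolding cluster_point_seq_def by (auto simp: not_frequently)
  from bchoice[OF this] obtain Ux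
    where "\<forall>x\<in>K. openin T (Ux x) \<and> x \<in> Ux x \<and> eventually (\<lambda>n. s n \<notin> Ux x) sequentially"
    by blast
  then have Ux: "\<And>x. x \<in> K \<Longrightarrow> openin T (Ux x) \<and> x \<in> Ux x \<and> eventually (\<lambda>n. s n \<notin> Ux x) sequentially"
    by blast
  have "K \<subseteq> \<Union>(Ux ` K)" using Ux by blast
  moreover have "\<forall>U\<in>Ux ` K. openin T U" using Ux by blast
  ultimately obtain \<F> where F: "finite \<F>" "\<F> \<subseteq> Ux ` K" "K \<subseteq> \<Union>\<F>"
    using K unfolding compactin_def by meson
  then obtain C where C: "C \<subseteq> K" "finite C" "\<F> = Ux ` C" by (meson finite_subset_image)
  have "eventually (\<lambda>n. \<forall>x\<in>C. s n \<notin> Ux x) sequentially"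
    using C Ux by (intro eventually_ball_finite) auto
  then obtain n where "\<forall>x\<in>C. s n \<notin> Ux x" using eventually_sequentially by auto
  moreover have "s n \<in> K" using s by auto
  then have "s n \<in> \<Union>\<F>" using F(3) by blast
  ultimately show False using C by auto
qed

lemma limitin_subseq:
  assumes "limitin T t x sequentially" "strict_mono r"
  shows "limitin T (t \<circ> r) x sequentially"
  using assms unfolding limitin_T_iff by (auto intro: eventually_subseq)

lemma limitin_seq_values_imp_subseq:
  fixes s :: "nat \<Rightarrow> 'v"
  assumes tx: "limitin T t x sequentially" and t: "range t \<subseteq> s ` {n. s n \<noteq> x}"
  shows "\<exists>r. strict_mono r \<and> limitin T (s \<circ> r) x sequentially"
proof -
  have "\<forall>k. \<exists>n. s n \<noteq> x \<and> t k = s n"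
  proof
    fix k
    have "t k \<in> s ` {n. s n \<noteq> x}" using t by (rule subsetD) simp
    then show "\<exists>n. s n \<noteq> x \<and> t k = s n" by auto
  qed
  then obtain idx where idx: "\<And>k. s (idx k) \<noteq> x \<and> t k = s (idx k)"
    using choice[of "\<lambda>k n. s n \<noteq> x \<and> t k = s n"] by blast
  have unbounded: "\<exists>K. \<forall>k\<ge>K. N \<le> idx k" for N
  proof -
    define Y where "Y = s ` ({..<N} \<inter> {n. s n \<noteq> x})"
    have "\<forall>y\<in>Y. eventually (\<lambda>k. t k \<noteq> y) sequentially"
    proof
      fix y assume "y \<in> Y"
      then have "y - x \<noteq> 0" unfolding Y_def by auto
      then obtain p where "p \<in> P" "p (y - x) \<noteq> 0" using seminorms_separate by blast
      then have p: "p \<in> P" "p (y - x) > 0" using seminorm_nonneg[of p "y - x"] by auto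
      have "eventually (\<lambda>k. p (t k - x) < p (y - x)) sequentially"
        using tx p unfolding limitin_T_iff by blast
      then show "eventually (\<lambda>k. t k \<noteq> y) sequentially" by (rule eventually_mono) auto
    qed
    moreover have "finite Y" unfolding Y_def by simp
    ultimately have "eventually (\<lambda>k. \<forall>y\<in>Y. t k \<noteq> y) sequentially"
      by (intro eventually_ball_finite) auto
    then obtain K where K: "\<And>k. k \<ge> K \<Longrightarrow> \<forall>y\<in>Y. t k \<noteq> y" unfolding eventually_sequentially by blast
    have "N \<le> idx k" if "k \<ge> K" for k
    proof (rule ccontr)
      assume "\<not> N \<le> idx k"
      then have "t k \<in> Y" unfolding Y_def using idx[of k] by auto
      then show False using K[OF that] by blast
    qed
    then show ?thesis by blast
  qed
  obtain r :: "nat \<Rightarrow> nat" where r: "strict_mono r" "strict_mono (idx \<circ> r)"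
    using strict_mono_subseq_of_unbounded[OF unbounded] by blast
  have "s \<circ> (idx \<circ> r) = t \<circ> r" using idx by (auto simp: fun_eq_iff)
  then have "limitin T (s \<circ> (idx \<circ> r)) x sequentially" using limitin_subseq[OF tx r(1)] by simp
  then show ?thesis using r(2) by blast
qed

lemma cluster_point_in_closure_of_other_values:
  fixes s :: "nat \<Rightarrow> 'v"
  assumes x: "cluster_point_seq T s x" and fin: "finite {n. s n = x}"
  shows "x \<in> T closure_of (s ` {n. s n \<noteq> x})"
  unfolding in_closure_of
proof (intro conjI allI impI)
  show "x \<in> topspace T" by simp
  fix U assume U: "x \<in> U \<and> openin T U"
  then have "\<exists>\<^sub>F n in sequentially. s n \<in> U" using x unfolding cluster_point_seq_def by blast
  moreover have "eventually (\<lambda>n. s n \<noteq> x) cofinite" using fin by (simp add: eventually_cofinite)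
  then have "eventually (\<lambda>n. s n \<noteq> x) sequentially" by (simp only: cofinite_eq_sequentially)
  ultimately have "\<exists>\<^sub>F n in sequentially. s n \<in> U \<and> s n \<noteq> x" by (rule frequently_eventually_frequently)
  then obtain n where "s n \<in> U" "s n \<noteq> x" using frequently_ex by blast
  then show "\<exists>y. y \<in> s ` {n. s n \<noteq> x} \<and> y \<in> U" by blast
qed

text \<open>A cluster point of a sequence in a compact set is a subsequential limit: either it is a
  value taken infinitely often, or, by the Frechet--Urysohn property of the compact set, it is
  the limit of a sequence of other values of the sequence.\<close>
lemma rel_compact_imp_rel_seq_compact:
  assumes ang: "angelic T" and A: "rel_compact T A"
  shows "rel_seq_compact T A"
  unfolding rel_seq_compact_def
proof (intro allI impI)
  fix s :: "nat \<Rightarrow> 'v" assume sA: "range s \<subseteq> A"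
  define K where "K = T closure_of A"
  have K: "compactin T K" using A unfolding rel_compact_def K_def by simp
  have AK: "A \<subseteq> K" unfolding K_def by (simp add: closure_of_subset)
  obtain x where x: "x \<in> K" "cluster_point_seq T s x" using compactin_seq_cluster_point[OF K] sA AK by blast
  show "\<exists>r l. strict_mono r \<and> limitin T (s \<circ> r) l sequentially"
  proof (cases "finite {n. s n = x}")
    case False
    define r where "r = enumerate {n. s n = x}"
    have "strict_mono r" unfolding r_def using False by (simp add: strict_mono_enumerate)
    moreover have "s \<circ> r = (\<lambda>n. x)" unfolding r_def using enumerate_in_set[OF False] by auto
    ultimately show ?thesis by (intro exI[of _ r] exI[of _ x]) simp
  next
    case True
    define S where "S = s ` {n. s n \<noteq> x}"
    have SK: "S \<subseteq> K" unfolding S_def using sA AK by auto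
    have "x \<in> (subtopology T K) closure_of S"
      using cluster_point_in_closure_of_other_values[OF x(2) True] x(1) SK
      unfolding S_def by (simp add: closure_of_subtopology Int_absorb1)
    moreover have "S \<subseteq> topspace (subtopology T K)" using SK by simp
    moreover have "frechet_urysohn (subtopology T K)" using ang K unfolding angelic_def by blast
    ultimately obtain t where t: "range t \<subseteq> S" "limitin (subtopology T K) t x sequentially"
      unfolding frechet_urysohn_def by blast
    then have "limitin T t x sequentially" by (simp add: limitin_subtopology)
    then show ?thesis using limitin_seq_values_imp_subseq t(1) unfolding S_def by blast
  qed
qed

lemma cauchy_seq_ultrafilter:
  assumes M: "free_filter M" "\<forall>X. X \<in> M \<or> - X \<in> M"
    and A: "precompact T A" and sA: "range s \<subseteq> A"
  shows "cauchy_filter_sn P (seq_ultrafilter M s)"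
  unfolding cauchy_filter_sn_def
proof (intro conjI ballI allI impI)
  show "seq_ultrafilter M s \<noteq> bot"
    unfolding eventually_False[symmetric] eventually_seq_ultrafilter[OF M(1)]
    using free_filter_empty[OF M(1)] by simp
  fix p and e :: real assume p: "p \<in> P" and e: "e > 0"
  define V where "V = seminorm_ball {p} (e/2) 0"
  have "openin T V" "0 \<in> V"
    unfolding V_def using openin_seminorm_ball[of "{p}"] p centre_in_seminorm_ball[of "e/2" "{p}"] e by auto
  then obtain H where H: "finite H" "A \<subseteq> (\<Union>f\<in>H. (\<lambda>u. f + u) ` V)"
    using A unfolding precompact_def by blast
  have "UNIV \<subseteq> (\<Union>f\<in>H. {n. s n \<in> (\<lambda>u. f + u) ` V})" using H(2) sA by blast
  then have "(\<Union>f\<in>H. {n. s n \<in> (\<lambda>u. f + u) ` V}) \<in> M"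
    using free_filter_mono[OF M(1) free_filter_UNIV[OF M(1)]] by blast
  then obtain f where f: "{n. s n \<in> (\<lambda>u. f + u) ` V} \<in> M"
    using ultrafilter_finite_Union[OF M H(1)] by blast
  show "\<exists>B. eventually (\<lambda>x. x \<in> B) (seq_ultrafilter M s) \<and> (\<forall>x\<in>B. \<forall>y\<in>B. p (x - y) < e)"
  proof (intro exI conjI ballI)
    show "eventually (\<lambda>x. x \<in> (\<lambda>u. f + u) ` V) (seq_ultrafilter M s)"
      unfolding eventually_seq_ultrafilter[OF M(1)] using f by simp
    fix x y assume "x \<in> (\<lambda>u. f + u) ` V" "y \<in> (\<lambda>u. f + u) ` V"
    then obtain u w where uw: "u \<in> V" "w \<in> V" "x = f + u" "y = f + w" by blast
    have "p (u - w) \<le> p (u - 0) + p (w - 0)"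
      using seminorm_diff_triangle[OF p, of u w 0] seminorm_minus_commute[OF p, of 0 w] by simp
    also have "\<dots> < e" using uw unfolding V_def seminorm_ball_def by auto
    finally show "p (x - y) < e" using uw by (simp add: algebra_simps)
  qed
qed

lemma seq_ultrafilter_limit_imp_cluster_point:
  assumes M: "free_filter M" and l: "limitin T (\<lambda>x. x) l (seq_ultrafilter M s)"
  shows "cluster_point_seq T s l"
  unfolding cluster_point_seq_def
proof (intro conjI allI impI)
  show "l \<in> topspace T" by simp
  fix U assume "openin T U \<and> l \<in> U"
  then have U: "{n. s n \<in> U} \<in> M" using l unfolding limitin_def eventually_seq_ultrafilter[OF M] by blast
  show "\<exists>\<^sub>F n in sequentially. s n \<in> U"
  proof (rule ccontr)
    assume "\<not> (\<exists>\<^sub>F n in sequentially. s n \<in> U)"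
    then obtain N where N: "\<And>n. n \<ge> N \<Longrightarrow> s n \<notin> U"
      unfolding not_frequently eventually_sequentially by blast
    have "- {N..} = {..<N}" by auto
    then have "{N..} \<in> M" using free_filter_cofinite[OF M, of "{N..}"] by simp
    then have "{n. s n \<in> U} \<inter> {N..} \<in> M" using U free_filter_Int[OF M] by blast
    moreover have "{n. s n \<in> U} \<inter> {N..} = {}" using N by auto
    ultimately show False using free_filter_empty[OF M] by simp
  qed
qed

lemma precompact_imp_rel_compact:
  assumes ang: "angelic T" and C: "complete_lcs P" and A: "precompact T A"
  shows "rel_compact T A"
proof -
  obtain M where M: "free_filter M" "\<forall>X. X \<in> M \<or> - X \<in> M" using free_ultrafilter_exists by blast
  have "rel_countably_compact T A"
    unfolding rel_countably_compact_def
  proof (intro conjI allI impI)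
    show "A \<subseteq> topspace T" by simp
    fix s :: "nat \<Rightarrow> 'v" assume "range s \<subseteq> A"
    then obtain l where "limitin T (\<lambda>x. x) l (seq_ultrafilter M s)"
      using C cauchy_seq_ultrafilter[OF M A] unfolding complete_lcs_def by blast
    then show "\<exists>x. cluster_point_seq T s x" using seq_ultrafilter_limit_imp_cluster_point[OF M(1)] by blast
  qed
  then show ?thesis using ang unfolding angelic_def by blast
qed

end

section \<open>Barrelled spaces\<close>

context lcs_space
begin

lemma dual_module_hom: "\<phi> \<in> dual smul P \<Longrightarrow> module_hom smul (*) \<phi>"
  unfolding dual_def by (auto simp: linear_iff_module_hom)

lemma dual_add: "\<phi> \<in> dual smul P \<Longrightarrow> \<phi> (x + y) = \<phi> x + \<phi> y"
  using dual_module_hom module_hom.add by blast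
lemma dual_scale: "\<phi> \<in> dual smul P \<Longrightarrow> \<phi> (smul c x) = c * \<phi> x"
  using dual_module_hom module_hom.scale by blast
lemma dual_zero: "\<phi> \<in> dual smul P \<Longrightarrow> \<phi> 0 = 0"
  using dual_scale[of \<phi> 0 0] by simp
lemma dual_diff: "\<phi> \<in> dual smul P \<Longrightarrow> \<phi> (x - y) = \<phi> x - \<phi> y"
  using dual_add[of \<phi> "x - y" y] by simp
lemma dual_continuous: "\<phi> \<in> dual smul P \<Longrightarrow> continuous_map T euclidean \<phi>"
  unfolding dual_def by auto

definition polar :: "('v \<Rightarrow> 'k) set \<Rightarrow> 'v set" where
  "polar B = {x. \<forall>\<phi>\<in>B. norm (\<phi> x) \<le> 1}"

lemma closedin_polar:
  assumes B: "B \<subseteq> dual smul P"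
  shows "closedin T (polar B)"
proof -
  have "openin T (topspace T - polar B)"
  proof (subst openin_subopen, intro ballI)
    fix x assume "x \<in> topspace T - polar B"
    then obtain \<phi> where \<phi>: "\<phi> \<in> B" "norm (\<phi> x) > 1" unfolding polar_def by auto
    have "openin T {y \<in> topspace T. \<phi> y \<in> {z. norm z > 1}}"
      by (rule openin_continuous_map_preimage[OF dual_continuous])
        (use \<phi> B in \<open>auto intro: open_Collect_less continuous_intros\<close>)
    then show "\<exists>U. openin T U \<and> x \<in> U \<and> U \<subseteq> topspace T - polar B"
      using \<phi> by (intro exI[of _ "{y \<in> topspace T. \<phi> y \<in> {z. norm z > 1}}"]) (auto simp: polar_def)
  qed
  then show ?thesis unfolding closedin_def by simp
qed

lemma absolutely_convex_polar:
  assumes B: "B \<subseteq> dual smul P"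
  shows "absolutely_convex smul (polar B)"
  unfolding absolutely_convex_def
proof (intro ballI allI impI)
  fix x y and a b :: 'k assume x: "x \<in> polar B" and y: "y \<in> polar B" and ab: "norm a + norm b \<le> 1"
  show "smul a x + smul b y \<in> polar B" unfolding polar_def
  proof (intro CollectI ballI)
    fix \<phi> assume \<phi>: "\<phi> \<in> B"
    then have d: "\<phi> \<in> dual smul P" using B by auto
    have "norm (\<phi> (smul a x + smul b y)) = norm (a * \<phi> x + b * \<phi> y)"
      using d by (simp add: dual_add dual_scale)
    also have "\<dots> \<le> norm a * norm (\<phi> x) + norm b * norm (\<phi> y)"
      by (metis norm_mult norm_triangle_ineq)
    also have "\<dots> \<le> norm a * 1 + norm b * 1"
      using x y \<phi> unfolding polar_def by (intro add_mono mult_left_mono) auto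
    finally show "norm (\<phi> (smul a x + smul b y)) \<le> 1" using ab by simp
  qed
qed

lemma absorbing_polar:
  assumes B: "B \<subseteq> dual smul P" and bd: "\<And>x. bdd_above ((\<lambda>\<phi>. norm (\<phi> x)) ` B)"
  shows "absorbing smul (polar B)"
  unfolding absorbing_def
proof
  fix x
  obtain M where M: "\<And>\<phi>. \<phi> \<in> B \<Longrightarrow> norm (\<phi> x) \<le> M" using bd[of x] unfolding bdd_above_def by auto
  define t where "t = 1 / (\<bar>M\<bar> + 1)"
  have "smul c x \<in> polar B" if c: "norm c \<le> t" for c
    unfolding polar_def
  proof (intro CollectI ballI)
    fix \<phi> assume \<phi>: "\<phi> \<in> B"
    have "\<phi> (smul c x) = c * \<phi> x" using \<phi> B dual_scale by blast
    then have "norm (\<phi> (smul c x)) = norm c * norm (\<phi> x)" by (simp add: norm_mult)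
    also have "\<dots> \<le> t * (\<bar>M\<bar> + 1)" using c M[OF \<phi>] by (intro mult_mono) (auto simp: t_def)
    also have "\<dots> = 1" unfolding t_def by simp
    finally show "norm (\<phi> (smul c x)) \<le> 1" .
  qed
  moreover have "t > 0" unfolding t_def by simp
  ultimately show "\<exists>t>0. \<forall>c. norm c \<le> t \<longrightarrow> smul c x \<in> polar B" by blast
qed

text \<open>The uniform boundedness principle: in a barrelled space, a pointwise bounded set of
  continuous functionals is equicontinuous, because its polar is a barrel.\<close>
lemma barrelled_uniform_bound:
  assumes bar: "barrelled smul P" and B: "B \<subseteq> dual smul P"
    and bd: "\<And>x. bdd_above ((\<lambda>\<phi>. norm (\<phi> x)) ` B)"
  shows "\<exists>Q \<delta>. finite Q \<and> Q \<subseteq> P \<and> \<delta> > 0 \<and> (\<forall>x. (\<forall>p\<in>Q. p x < \<delta>) \<longrightarrow> (\<forall>\<phi>\<in>B. norm (\<phi> x) \<le> 1))"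
proof -
  have "0 \<in> polar B" using B dual_zero unfolding polar_def by force
  then obtain U where U: "openin T U" "0 \<in> U" "U \<subseteq> polar B"
    using bar closedin_polar[OF B] absolutely_convex_polar[OF B] absorbing_polar[OF B bd]
    unfolding barrelled_def by blast
  then obtain Q \<delta> where Q: "finite Q" "Q \<subseteq> P" "\<delta> > 0" "seminorm_ball Q \<delta> 0 \<subseteq> U"
    using openin_T_iff by meson
  show ?thesis
    using Q U by (intro exI[of _ Q] exI[of _ \<delta>]) (auto simp: seminorm_ball_def polar_def)
qed

lemma uniform_bound_scaled:
  assumes "B \<subseteq> dual smul P" "Q \<subseteq> P" "\<delta> > 0" "\<forall>x. (\<forall>p\<in>Q. p x < \<delta>) \<longrightarrow> (\<forall>\<phi>\<in>B. norm (\<phi> x) \<le> 1)"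
    and "\<eta> > 0" "\<forall>p\<in>Q. p x < \<delta> * \<eta>" "\<phi> \<in> B"
  shows "norm (\<phi> x) \<le> \<eta>"
proof -
  define y where "y = smul (of_real (1/\<eta>)) x"
  have "\<forall>p\<in>Q. p y < \<delta>"
  proof
    fix p assume p: "p \<in> Q"
    have "p y = norm (of_real (1/\<eta>) :: 'k) * p x" unfolding y_def using p assms(2) seminorm_scale by blast
    also have "norm (of_real (1/\<eta>) :: 'k) = 1/\<eta>" using assms(5) by (simp only: norm_of_real) simp
    finally have "p y = (1/\<eta>) * p x" .
    also have "(1/\<eta>) * p x < (1/\<eta>) * (\<delta> * \<eta>)" using assms(5,6) p by (intro mult_strict_left_mono) auto
    finally show "p y < \<delta>" using assms(5) by simp
  qed
  then have "norm (\<phi> y) \<le> 1" using assms(4,7) by blast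
  moreover have "\<phi> y = of_real (1/\<eta>) * \<phi> x" unfolding y_def using assms(1,7) dual_scale by blast
  ultimately have "norm (of_real (1/\<eta>) * \<phi> x) \<le> 1" by simp
  then have "(1/\<eta>) * norm (\<phi> x) \<le> 1" using assms(5) by (simp only: norm_mult norm_of_real) simp
  then show ?thesis using assms(5) by (simp add: field_simps)
qed

lemma in_lp_imp_tendsto_0: assumes "1 \<le> p" "in_lp p s" shows "s \<longlonglongrightarrow> 0"
proof (cases "p = \<infinity>")
  case True then show ?thesis using assms unfolding in_lp_def by simp
next
  case False
  define r where "r = real_of_ereal p"
  have r: "r \<ge> 1" using assms(1) False unfolding r_def
    by (cases p) auto
  have "summable (\<lambda>n. \<bar>s n\<bar> powr r)" using assms(2) False unfolding in_lp_def r_def by simp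
  then have L: "(\<lambda>n. \<bar>s n\<bar> powr r) \<longlonglongrightarrow> 0" by (rule summable_LIMSEQ_zero)
  show ?thesis
  proof (rule LIMSEQ_I)
    fix e :: real assume e: "e > 0"
    have "e powr r > 0" using e by simp
    then obtain N where N: "\<And>n. n \<ge> N \<Longrightarrow> norm (\<bar>s n\<bar> powr r - 0) < e powr r" using L LIMSEQ_D by blast
    show "\<exists>N. \<forall>n\<ge>N. norm (s n - 0) < e"
    proof (intro exI allI impI)
      fix n assume "n \<ge> N"
      then have "\<bar>s n\<bar> powr r < e powr r" using N by fastforce
      moreover have "\<bar>s n\<bar> \<ge> e \<Longrightarrow> e powr r \<le> \<bar>s n\<bar> powr r" using r e by (intro powr_mono2) auto
      ultimately show "norm (s n - 0) < e" by force
    qed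
  qed
qed

lemma weak_star_summable_pointwise_bounded:
  assumes "1 \<le> p" "weak_star_summable smul P p \<phi>s"
  shows "bdd_above ((\<lambda>\<phi>. norm (\<phi> x)) ` range \<phi>s)"
proof -
  have "(\<lambda>n. norm (\<phi>s n x)) \<longlonglongrightarrow> 0" using assms in_lp_imp_tendsto_0 unfolding weak_star_summable_def by blast
  then have "Bseq (\<lambda>n. norm (\<phi>s n x))" using convergent_imp_Bseq convergentI by blast
  then have "bdd_above (range (\<lambda>n. norm (\<phi>s n x)))" by (rule Bseq_bdd_above)
  then show ?thesis by (simp add: image_image)
qed

lemma weak_star_summable_equicontinuous:
  assumes bar: "barrelled smul P" and "1 \<le> p" and W: "weak_star_summable smul P p \<phi>s"
  shows "equicontinuous T (range \<phi>s)"
proof -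
  have B: "range \<phi>s \<subseteq> dual smul P" using W unfolding weak_star_summable_def by auto
  obtain Q \<delta> where Q: "finite Q" "Q \<subseteq> P" "\<delta> > 0" "\<forall>x. (\<forall>p\<in>Q. p x < \<delta>) \<longrightarrow> (\<forall>\<phi>\<in>range \<phi>s. norm (\<phi> x) \<le> 1)"
    using barrelled_uniform_bound[OF bar B weak_star_summable_pointwise_bounded[OF assms(2,3)]] by blast
  show ?thesis unfolding equicontinuous_def
  proof (intro ballI allI impI)
    fix x0 and e :: real assume e: "e > 0"
    show "\<exists>U. openin T U \<and> x0 \<in> U \<and> (\<forall>\<phi>\<in>range \<phi>s. \<forall>x\<in>U. norm (\<phi> x - \<phi> x0) < e)"
    proof (intro exI conjI ballI)
      show "openin T (seminorm_ball Q (\<delta> * (e/2)) x0)" using openin_seminorm_ball Q by blast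
      show "x0 \<in> seminorm_ball Q (\<delta> * (e/2)) x0" using Q e by (intro centre_in_seminorm_ball) auto
      fix \<phi> x assume \<phi>: "\<phi> \<in> range \<phi>s" and x: "x \<in> seminorm_ball Q (\<delta> * (e/2)) x0"
      have "norm (\<phi> (x - x0)) \<le> e/2"
        using uniform_bound_scaled[OF B Q(2,3,4), of "e/2" "x - x0" \<phi>] \<phi> x e by (auto simp: seminorm_ball_def)
      then show "norm (\<phi> x - \<phi> x0) < e" using \<phi> B e dual_diff by fastforce
    qed
  qed
qed

lemma pq_E_limited_iff_pq_limited:
  assumes bar: "barrelled smul P" and "1 \<le> p"
  shows "pq_E_limited smul P p q A \<longleftrightarrow> pq_limited smul P p q A"
  unfolding pq_E_limited_def pq_limited_def using weak_star_summable_equicontinuous[OF bar assms(2)] by blast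

definition sup_seminorm :: "('v \<Rightarrow> 'k) set \<Rightarrow> 'v \<Rightarrow> real" where
  "sup_seminorm B = (\<lambda>x. Sup (insert 0 ((\<lambda>\<phi>. norm (\<phi> x)) ` B)))"

lemma sup_seminorm_upper: assumes "\<And>x. bdd_above ((\<lambda>\<phi>. norm (\<phi> x)) ` B)" "\<phi> \<in> B"
  shows "norm (\<phi> x) \<le> sup_seminorm B x"
  unfolding sup_seminorm_def using assms by (intro cSup_upper) auto

lemma sup_seminorm_nonneg: assumes "\<And>x. bdd_above ((\<lambda>\<phi>. norm (\<phi> x)) ` B)"
  shows "0 \<le> sup_seminorm B x"
  unfolding sup_seminorm_def using assms by (intro cSup_upper) auto

lemma sup_seminorm_least: assumes "0 \<le> M" "\<And>\<phi>. \<phi> \<in> B \<Longrightarrow> norm (\<phi> x) \<le> M"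
  shows "sup_seminorm B x \<le> M"
  unfolding sup_seminorm_def using assms by (intro cSup_least) auto

lemma sup_seminorm_triangle: assumes B: "B \<subseteq> dual smul P" and bd: "\<And>x. bdd_above ((\<lambda>\<phi>. norm (\<phi> x)) ` B)"
  shows "sup_seminorm B (a + b) \<le> sup_seminorm B a + sup_seminorm B b"
proof (rule sup_seminorm_least)
  show "0 \<le> sup_seminorm B a + sup_seminorm B b" using sup_seminorm_nonneg[OF bd] by (simp add: add_nonneg_nonneg)
  fix \<phi> assume \<phi>: "\<phi> \<in> B"
  have "norm (\<phi> (a + b)) = norm (\<phi> a + \<phi> b)" using \<phi> B dual_add by auto
  also have "\<dots> \<le> norm (\<phi> a) + norm (\<phi> b)" by (rule norm_triangle_ineq)
  also have "\<dots> \<le> sup_seminorm B a + sup_seminorm B b" using sup_seminorm_upper[OF bd \<phi>] by (simp add: add_mono)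
  finally show "norm (\<phi> (a + b)) \<le> sup_seminorm B a + sup_seminorm B b" .
qed

lemma strong_seminorms_iff: "q \<in> strong_seminorms smul P \<longleftrightarrow>
   (\<exists>B. B \<subseteq> dual smul P \<and> (\<forall>x. bdd_above ((\<lambda>\<phi>. norm (\<phi> x)) ` B)) \<and> q = sup_seminorm B)"
  unfolding strong_seminorms_def sup_seminorm_def by auto

lemma strong_seminorm_bounded_on_nhd:
  assumes bar: "barrelled smul P" and q: "q \<in> strong_seminorms smul P" and \<epsilon>: "\<epsilon> > 0"
  obtains Q \<delta> where "finite Q" "Q \<subseteq> P" "\<delta> > 0" "\<And>y. (\<forall>p\<in>Q. p y < \<delta>) \<Longrightarrow> q y < \<epsilon>"
proof -
  obtain B where B: "B \<subseteq> dual smul P" "\<And>x. bdd_above ((\<lambda>\<phi>. norm (\<phi> x)) ` B)" "q = sup_seminorm B"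
    using q unfolding strong_seminorms_iff by blast
  obtain Q \<delta> where Q: "finite Q" "Q \<subseteq> P" "\<delta> > 0"
      "\<forall>x. (\<forall>p\<in>Q. p x < \<delta>) \<longrightarrow> (\<forall>\<phi>\<in>B. norm (\<phi> x) \<le> 1)"
    using barrelled_uniform_bound[OF bar B(1,2)] by blast
  have "q y < \<epsilon>" if y: "\<forall>p\<in>Q. p y < \<delta> * (\<epsilon>/2)" for y
  proof -
    have "norm (\<phi> y) \<le> \<epsilon>/2" if "\<phi> \<in> B" for \<phi>
      by (rule uniform_bound_scaled[OF B(1) Q(2,3,4)]) (use \<epsilon> y that in auto)
    then have "sup_seminorm B y \<le> \<epsilon>/2" using \<epsilon> by (intro sup_seminorm_least) auto
    then show ?thesis using B(3) \<epsilon> by simp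
  qed
  moreover have "\<delta> * (\<epsilon>/2) > 0" using Q(3) \<epsilon> by simp
  ultimately show thesis using that[OF Q(1,2), of "\<delta> * (\<epsilon>/2)"] by blast
qed

lemma strong_ball_contains_nhd:
  assumes bar: "barrelled smul P" and Q': "finite Q'" "Q' \<subseteq> strong_seminorms smul P" and \<epsilon>: "\<epsilon> > 0"
  shows "\<exists>V. openin T V \<and> 0 \<in> V \<and> V \<subseteq> seminorm_ball Q' \<epsilon> 0"
  using Q'
proof (induction Q' rule: finite_induct)
  case empty
  have "seminorm_ball {} \<epsilon> 0 = topspace T" by (simp add: seminorm_ball_def)
  then show ?case by (metis openin_topspace subset_refl UNIV_I topspace_T)
next
  case (insert q Q')
  then obtain V where V: "openin T V" "0 \<in> V" "V \<subseteq> seminorm_ball Q' \<epsilon> 0" by blast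
  obtain Q \<delta> where Q: "finite Q" "Q \<subseteq> P" "\<delta> > 0" "\<And>y. (\<forall>p\<in>Q. p y < \<delta>) \<Longrightarrow> q y < \<epsilon>"
    using strong_seminorm_bounded_on_nhd[OF bar _ \<epsilon>, of q] insert.prems by blast
  have "openin T (V \<inter> seminorm_ball Q \<delta> 0)"
    using openin_Int[OF V(1) openin_seminorm_ball[OF Q(1,2)]] .
  moreover have "0 \<in> V \<inter> seminorm_ball Q \<delta> 0" using V Q by (auto simp: seminorm_ball_def)
  moreover have "V \<inter> seminorm_ball Q \<delta> 0 \<subseteq> seminorm_ball (insert q Q') \<epsilon> 0"
    using V(3) Q(4) by (auto simp: seminorm_ball_def)
  ultimately show ?case by blast
qed

lemma precompact_imp_precompact_strong:
  assumes bar: "barrelled smul P" and A: "precompact T A"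
  shows "precompact (strong_top smul P) A"
proof (rule precompact_finer_nhds[OF A])
  fix W assume W: "openin (strong_top smul P) W" "0 \<in> W"
  from W(1)[unfolded strong_top_def openin_seminorm_top, rule_format, OF W(2)]
  obtain Q' \<epsilon> where Q': "finite Q'" "Q' \<subseteq> strong_seminorms smul P" "\<epsilon> > 0"
    and ball: "seminorm_ball Q' \<epsilon> 0 \<subseteq> W"
    by blast
  obtain V where "openin T V" "0 \<in> V" "V \<subseteq> seminorm_ball Q' \<epsilon> 0"
    using strong_ball_contains_nhd[OF bar Q'] by blast
  then show "\<exists>V. openin T V \<and> 0 \<in> V \<and> V \<subseteq> W" using ball by (meson order_trans)
qed

end

section \<open>Hahn--Banach and the strong topology\<close>

context lcs_space
begin

lemma seminorm_scale_of_real: "p \<in> P \<Longrightarrow> p (smul (of_real r) x) = \<bar>r\<bar> * p x"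
  using seminorm_scale[of p "of_real r" x] by simp

lemma scale_of_real_add: "smul (of_real (r + s)) x = smul (of_real r) x + smul (of_real s) x"
  by (simp add: vs.scale_left_distrib)

text \<open>Partial real-linear functionals dominated by \<open>p\<close> and agreeing with \<open>p\<close> at \<open>x0\<close>,
  represented by their graphs, so that extension is inclusion and Zorn's lemma applies.\<close>
definition dominated_graph :: "('v \<Rightarrow> real) \<Rightarrow> 'v \<Rightarrow> ('v \<times> real) set \<Rightarrow> bool" where
  "dominated_graph p x0 G \<longleftrightarrow> (\<forall>x a b. (x, a) \<in> G \<longrightarrow> (x, b) \<in> G \<longrightarrow> a = b) \<and> (x0, p x0) \<in> G \<and>
     (\<forall>x a y b. (x, a) \<in> G \<longrightarrow> (y, b) \<in> G \<longrightarrow> (x + y, a + b) \<in> G) \<and>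
     (\<forall>x a r. (x, a) \<in> G \<longrightarrow> (smul (of_real r) x, r * a) \<in> G) \<and> (\<forall>x a. (x, a) \<in> G \<longrightarrow> a \<le> p x)"

lemma dominated_graph_functional: "dominated_graph p x0 G \<Longrightarrow> (x, a) \<in> G \<Longrightarrow> (x, b) \<in> G \<Longrightarrow> a = b"
  unfolding dominated_graph_def by blast
lemma dominated_graph_base: "dominated_graph p x0 G \<Longrightarrow> (x0, p x0) \<in> G"
  unfolding dominated_graph_def by blast
lemma dominated_graph_add: "dominated_graph p x0 G \<Longrightarrow> (x, a) \<in> G \<Longrightarrow> (y, b) \<in> G \<Longrightarrow> (x + y, a + b) \<in> G"
  unfolding dominated_graph_def by blast
lemma dominated_graph_scale: "dominated_graph p x0 G \<Longrightarrow> (x, a) \<in> G \<Longrightarrow> (smul (of_real r) x, r * a) \<in> G"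
  unfolding dominated_graph_def by blast
lemma dominated_graph_le: "dominated_graph p x0 G \<Longrightarrow> (x, a) \<in> G \<Longrightarrow> a \<le> p x"
  unfolding dominated_graph_def by blast
lemma dominated_graphI:
  assumes "\<And>x a b. (x, a) \<in> G \<Longrightarrow> (x, b) \<in> G \<Longrightarrow> a = b" "(x0, p x0) \<in> G"
    "\<And>x a y b. (x, a) \<in> G \<Longrightarrow> (y, b) \<in> G \<Longrightarrow> (x + y, a + b) \<in> G"
    "\<And>x a r. (x, a) \<in> G \<Longrightarrow> (smul (of_real r) x, r * a) \<in> G" "\<And>x a. (x, a) \<in> G \<Longrightarrow> a \<le> p x"
  shows "dominated_graph p x0 G"
  unfolding dominated_graph_def using assms by blast

lemma dominated_graph_0: assumes "dominated_graph p x0 G" shows "(0, 0) \<in> G"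
  using dominated_graph_scale[OF assms dominated_graph_base[OF assms], of 0] by simp

lemma dominated_graph_minus: "dominated_graph p x0 G \<Longrightarrow> (x, a) \<in> G \<Longrightarrow> (- x, - a) \<in> G"
  using dominated_graph_scale[of p x0 G x a "-1"] by simp

lemma dominated_graph_line:
  assumes p: "p \<in> P"
  shows "dominated_graph p x0 {(smul (of_real t) x0, t * p x0) | t. True}"
proof (rule dominated_graphI)
  fix x a b assume "(x, a) \<in> {(smul (of_real t) x0, t * p x0) | t. True}" "(x, b) \<in> {(smul (of_real t) x0, t * p x0) | t. True}"
  then obtain t t' where tt: "x = smul (of_real t) x0" "a = t * p x0" "x = smul (of_real t') x0" "b = t' * p x0" by blast
  have "smul (of_real t) x0 = smul (of_real t') x0" by (rule trans[OF tt(1)[symmetric] tt(3)])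
  then have "t = t' \<or> x0 = 0" by auto
  then show "a = b" using tt p by auto
next
  show "(x0, p x0) \<in> {(smul (of_real t) x0, t * p x0) | t. True}" by (auto intro!: exI[of _ 1])
next
  fix x a y b assume "(x, a) \<in> {(smul (of_real t) x0, t * p x0) | t. True}" "(y, b) \<in> {(smul (of_real t) x0, t * p x0) | t. True}"
  then obtain t t' where "x = smul (of_real t) x0" "a = t * p x0" "y = smul (of_real t') x0" "b = t' * p x0" by blast
  then show "(x + y, a + b) \<in> {(smul (of_real t) x0, t * p x0) | t. True}"
    by (intro CollectI exI[of _ "t + t'"]) (simp add: scale_of_real_add algebra_simps)
next
  fix x a r assume "(x, a) \<in> {(smul (of_real t) x0, t * p x0) | t. True}"
  then obtain t where "x = smul (of_real t) x0" "a = t * p x0" by blast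
  then show "(smul (of_real r) x, r * a) \<in> {(smul (of_real t) x0, t * p x0) | t. True}"
    by (intro CollectI exI[of _ "r * t"]) simp
next
  fix x a assume "(x, a) \<in> {(smul (of_real t) x0, t * p x0) | t. True}"
  then obtain t where t: "x = smul (of_real t) x0" "a = t * p x0" by blast
  have "p x = \<bar>t\<bar> * p x0" using t seminorm_scale_of_real[OF p] by simp
  moreover have "t * p x0 \<le> \<bar>t\<bar> * p x0" using seminorm_nonneg[OF p, of x0] by (intro mult_right_mono) auto
  ultimately show "a \<le> p x" using t by simp
qed

lemma dominated_graph_Union_chain:
  assumes C: "subset.chain {G. dominated_graph p x0 G} C" and ne: "C \<noteq> {}"
  shows "dominated_graph p x0 (\<Union>C)"
proof -
  have CC: "\<And>X. X \<in> C \<Longrightarrow> dominated_graph p x0 X"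
    and tot: "\<And>X Y. X \<in> C \<Longrightarrow> Y \<in> C \<Longrightarrow> X \<subseteq> Y \<or> Y \<subseteq> X"
    using C unfolding subset.chain_def by auto
  have two: "\<exists>G\<in>C. u \<in> G \<and> v \<in> G" if uv: "u \<in> \<Union>C" "v \<in> \<Union>C" for u v
  proof -
    obtain G1 G2 where G: "G1 \<in> C" "G2 \<in> C" "u \<in> G1" "v \<in> G2" using uv by blast
    then show ?thesis using tot[OF G(1,2)] by blast
  qed
  show ?thesis
  proof (rule dominated_graphI)
    fix x a b assume "(x, a) \<in> \<Union>C" "(x, b) \<in> \<Union>C"
    then obtain G where "G \<in> C" "(x, a) \<in> G" "(x, b) \<in> G" using two by blast
    then show "a = b" using dominated_graph_functional[OF CC] by blast
  next
    obtain G where "G \<in> C" using ne by blast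
    then show "(x0, p x0) \<in> \<Union>C" using dominated_graph_base[OF CC] by blast
  next
    fix x a y b assume "(x, a) \<in> \<Union>C" "(y, b) \<in> \<Union>C"
    then obtain G where "G \<in> C" "(x, a) \<in> G" "(y, b) \<in> G" using two by blast
    then show "(x + y, a + b) \<in> \<Union>C" using dominated_graph_add[OF CC] by blast
  next
    fix x a r assume "(x, a) \<in> \<Union>C"
    then obtain G where "G \<in> C" "(x, a) \<in> G" by blast
    then show "(smul (of_real r) x, r * a) \<in> \<Union>C" using dominated_graph_scale[OF CC] by blast
  next
    fix x a assume "(x, a) \<in> \<Union>C"
    then obtain G where "G \<in> C" "(x, a) \<in> G" by blast
    then show "a \<le> p x" using dominated_graph_le[OF CC] by blast
  qed
qed

text \<open>The value given to a new direction \<open>y\<close> in the one-step extension of Hahn--Banach.\<close>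
lemma dominated_graph_extension_value:
  assumes p: "p \<in> P" and M: "dominated_graph p x0 M"
  obtains c where "\<And>x a. (x, a) \<in> M \<Longrightarrow> a - p (x - y) \<le> c"
    "\<And>x a. (x, a) \<in> M \<Longrightarrow> c \<le> p (x + y) - a"
proof -
  define S where "S = {a - p (x - y) | x a. (x, a) \<in> M}"
  have key: "a - p (x - y) \<le> p (x' + y) - a'" if "(x, a) \<in> M" "(x', a') \<in> M" for x a x' a'
  proof -
    have "a + a' \<le> p (x + x')" using dominated_graph_le[OF M dominated_graph_add[OF M that]] .
    also have "p (x + x') \<le> p (x - y) + p (x' + y)" using seminorm_triangle[OF p, of "x - y" "x' + y"] by simp
    finally show ?thesis by linarith
  qed
  have "S \<noteq> {}" unfolding S_def using dominated_graph_0[OF M] by blast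
  moreover have "bdd_above S" unfolding S_def
    by (rule bdd_aboveI[of _ "p (0 + y) - 0"]) (use key dominated_graph_0[OF M] in blast)
  ultimately show thesis
    using that[of "Sup S"] key by (auto intro!: cSup_upper cSup_least simp: S_def)
qed

lemma dominated_graph_extension_le:
  assumes p: "p \<in> P" and M: "dominated_graph p x0 M"
    and cl: "\<And>x a. (x, a) \<in> M \<Longrightarrow> a - p (x - y) \<le> c"
    and cu: "\<And>x a. (x, a) \<in> M \<Longrightarrow> c \<le> p (x + y) - a"
    and xa: "(x, a) \<in> M"
  shows "a + t * c \<le> p (x + smul (of_real t) y)"
proof -
  consider "t = 0" | "t > 0" | "t < 0" by linarith
  then show ?thesis
  proof cases
    case 1 then show ?thesis using dominated_graph_le[OF M xa] by simp
  next
    case 2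
    have "(smul (of_real (1 / t)) x, (1 / t) * a) \<in> M" using dominated_graph_scale[OF M xa] .
    then have "c \<le> p (smul (of_real (1 / t)) x + y) - (1 / t) * a" by (rule cu)
    then have "t * c \<le> t * p (smul (of_real (1 / t)) x + y) - a" using 2 by (simp add: field_simps)
    also have "t * p (smul (of_real (1 / t)) x + y) = p (smul (of_real t) (smul (of_real (1 / t)) x + y))"
      using seminorm_scale_of_real[OF p] 2 by simp
    also have "smul (of_real t) (smul (of_real (1 / t)) x + y) = x + smul (of_real t) y"
      using 2 by (simp add: vs.scale_right_distrib)
    finally show ?thesis by simp
  next
    case 3
    define s where "s = - t"
    have s: "s > 0" using 3 unfolding s_def by simp
    have "(smul (of_real (1 / s)) x, (1 / s) * a) \<in> M" using dominated_graph_scale[OF M xa] .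
    then have "(1 / s) * a - p (smul (of_real (1 / s)) x - y) \<le> c" by (rule cl)
    then have "a - s * p (smul (of_real (1 / s)) x - y) \<le> s * c" using s by (simp add: field_simps)
    also have "s * p (smul (of_real (1 / s)) x - y) = p (smul (of_real s) (smul (of_real (1 / s)) x - y))"
      using seminorm_scale_of_real[OF p] s by simp
    also have "smul (of_real s) (smul (of_real (1 / s)) x - y) = x + smul (of_real t) y"
      using s unfolding s_def by (simp add: vs.scale_right_diff_distrib)
    finally show ?thesis unfolding s_def by simp
  qed
qed

lemma dominated_graph_extension_functional:
  assumes M: "dominated_graph p x0 M" and y: "\<And>a. (y, a) \<notin> M"
    and E: "(x1, a1) \<in> M" "(x2, a2) \<in> M" "x1 + smul (of_real t1) y = x2 + smul (of_real t2) y"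
  shows "a1 + t1 * c = a2 + t2 * c"
proof (cases "t1 = t2")
  case True
  then show ?thesis using E dominated_graph_functional[OF M] by simp
next
  case False
  have "(x2 + - x1, a2 + - a1) \<in> M" using dominated_graph_add[OF M E(2) dominated_graph_minus[OF M E(1)]] .
  from dominated_graph_scale[OF M this, of "1 / (t1 - t2)"]
  have in1: "(smul (of_real (1 / (t1 - t2))) (x2 + - x1), (1 / (t1 - t2)) * (a2 + - a1)) \<in> M" .
  have "smul (of_real t1) y - smul (of_real t2) y = x2 - x1" using E(3) by (simp add: algebra_simps)
  then have eq: "smul (of_real (t1 - t2)) y = x2 - x1" by (simp add: vs.scale_left_diff_distrib)
  have "smul (of_real (1 / (t1 - t2))) (x2 + - x1) = smul (of_real (1 / (t1 - t2))) (smul (of_real (t1 - t2)) y)"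
    using eq by simp
  also have "\<dots> = smul (of_real (1 / (t1 - t2)) * of_real (t1 - t2)) y" by (rule vs.scale_scale)
  also have "of_real (1 / (t1 - t2)) * of_real (t1 - t2) = (1::'k)"
    using False by (simp add: of_real_mult[symmetric] del: of_real_mult)
  finally have "smul (of_real (1 / (t1 - t2))) (x2 + - x1) = y" by simp
  then show ?thesis using in1 y by metis
qed

lemma dominated_graph_extension:
  assumes p: "p \<in> P" and M: "dominated_graph p x0 M" and y: "\<And>a. (y, a) \<notin> M"
  obtains M' c where "dominated_graph p x0 M'" "M \<subseteq> M'" "(y, c) \<in> M'"
proof -
  obtain c where cl: "\<And>x a. (x, a) \<in> M \<Longrightarrow> a - p (x - y) \<le> c"
    and cu: "\<And>x a. (x, a) \<in> M \<Longrightarrow> c \<le> p (x + y) - a"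
    using dominated_graph_extension_value[OF p M] by blast
  define M' where "M' = {(x + smul (of_real t) y, a + t * c) | x a t. (x, a) \<in> M}"
  have "dominated_graph p x0 M'"
  proof (rule dominated_graphI)
    fix z a b assume "(z, a) \<in> M'" "(z, b) \<in> M'"
    then show "a = b"
      unfolding M'_def using dominated_graph_extension_functional[OF M y] by fastforce
  next
    show "(x0, p x0) \<in> M'" unfolding M'_def using dominated_graph_base[OF M]
      by (intro CollectI exI[of _ x0] exI[of _ "p x0"] exI[of _ 0]) simp
  next
    fix z a w b assume "(z, a) \<in> M'" "(w, b) \<in> M'"
    then obtain x1 a1 t1 x2 a2 t2 where E: "(x1, a1) \<in> M" "(x2, a2) \<in> M" "z = x1 + smul (of_real t1) y"
      "a = a1 + t1 * c" "w = x2 + smul (of_real t2) y" "b = a2 + t2 * c" unfolding M'_def by blast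
    have "(x1 + x2, a1 + a2) \<in> M" using dominated_graph_add[OF M E(1,2)] .
    moreover have "z + w = (x1 + x2) + smul (of_real (t1 + t2)) y" using E by (simp add: scale_of_real_add algebra_simps)
    moreover have "a + b = (a1 + a2) + (t1 + t2) * c" using E by (simp add: algebra_simps)
    ultimately show "(z + w, a + b) \<in> M'" unfolding M'_def by blast
  next
    fix z a r assume "(z, a) \<in> M'"
    then obtain x1 a1 t1 where E: "(x1, a1) \<in> M" "z = x1 + smul (of_real t1) y" "a = a1 + t1 * c"
      unfolding M'_def by blast
    have "(smul (of_real r) x1, r * a1) \<in> M" using dominated_graph_scale[OF M E(1)] .
    moreover have "smul (of_real r) z = smul (of_real r) x1 + smul (of_real (r * t1)) y"
      using E by (simp add: vs.scale_right_distrib)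
    moreover have "r * a = r * a1 + (r * t1) * c" using E by (simp add: algebra_simps)
    ultimately show "(smul (of_real r) z, r * a) \<in> M'" unfolding M'_def by blast
  next
    fix z a assume "(z, a) \<in> M'"
    then show "a \<le> p z"
      unfolding M'_def using dominated_graph_extension_le[OF p M cl cu] by blast
  qed
  moreover have "M \<subseteq> M'" unfolding M'_def by (force intro: exI[of _ 0])
  moreover have "(y, c) \<in> M'" unfolding M'_def using dominated_graph_0[OF M]
    by (intro CollectI exI[of _ 0] exI[of _ 0] exI[of _ 1]) simp
  ultimately show thesis using that by blast
qed

lemma real_hahn_banach:
  assumes p: "p \<in> P"
  shows "\<exists>f. (\<forall>x y. f (x + y) = f x + f y) \<and> (\<forall>r x. f (smul (of_real r) x) = r * f x) \<and>
             (\<forall>x. f x \<le> p x) \<and> f x0 = p x0"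
proof -
  have "\<exists>M\<in>{G. dominated_graph p x0 G}. \<forall>X\<in>{G. dominated_graph p x0 G}. M \<subseteq> X \<longrightarrow> X = M"
  proof (rule subset_Zorn)
    fix C assume C: "subset.chain {G. dominated_graph p x0 G} C"
    show "\<exists>U\<in>{G. dominated_graph p x0 G}. \<forall>X\<in>C. X \<subseteq> U"
    proof (cases "C = {}")
      case True then show ?thesis using dominated_graph_line[OF p] by blast
    next
      case False then show ?thesis using dominated_graph_Union_chain[OF C] by blast
    qed
  qed
  then obtain M where M: "dominated_graph p x0 M"
    and Mmax: "\<And>X. dominated_graph p x0 X \<Longrightarrow> M \<subseteq> X \<Longrightarrow> X = M" by blast
  have total: "\<exists>a. (y, a) \<in> M" for y
  proof (rule ccontr)
    assume "\<not> (\<exists>a. (y, a) \<in> M)"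
    then obtain M' c where "dominated_graph p x0 M'" "M \<subseteq> M'" "(y, c) \<in> M'"
      using dominated_graph_extension[OF p M] by blast
    then show False using Mmax \<open>\<not> (\<exists>a. (y, a) \<in> M)\<close> by blast
  qed
  define f where "f x = (THE a. (x, a) \<in> M)" for x
  have fv: "f x = a" if "(x, a) \<in> M" for x a
    unfolding f_def using that dominated_graph_functional[OF M] by blast
  have fM: "(x, f x) \<in> M" for x using total[of x] fv by blast
  have "f (x + y) = f x + f y" for x y using fv[OF dominated_graph_add[OF M fM fM]] .
  moreover have "f (smul (of_real r) x) = r * f x" for r x using fv[OF dominated_graph_scale[OF M fM]] .
  moreover have "f x \<le> p x" for x using dominated_graph_le[OF M fM] .
  moreover have "f x0 = p x0" using fv[OF dominated_graph_base[OF M]] .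
  ultimately show ?thesis by blast
qed

lemma dominated_linear_in_dual:
  assumes add: "\<And>x y. \<phi> (x + y) = \<phi> x + \<phi> y" and sc: "\<And>c x. \<phi> (smul c x) = c * \<phi> x"
    and p: "p \<in> P" and dom: "\<And>x. norm (\<phi> x) \<le> p x"
  shows "\<phi> \<in> dual smul P"
proof -
  have lin: "Vector_Spaces.linear smul (*) \<phi>"
    unfolding Vector_Spaces.linear_iff using vs.vector_space_axioms vector_space_over_itself.vector_space_axioms add sc by blast
  have diff: "\<phi> (x - y) = \<phi> x - \<phi> y" for x y using add[of "x - y" y] by simp
  have "continuous_map T euclidean \<phi>"
    unfolding continuous_map_def
  proof (intro conjI allI impI)
    show "\<phi> \<in> topspace T \<rightarrow> topspace euclidean" by simp
    fix U :: "'k set" assume "openin euclidean U"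
    then have U: "open U" by simp
    show "openin T {x \<in> topspace T. \<phi> x \<in> U}"
      unfolding openin_T_iff
    proof
      fix x assume "x \<in> {x \<in> topspace T. \<phi> x \<in> U}"
      then obtain e where e: "e > 0" "ball (\<phi> x) e \<subseteq> U" using U open_contains_ball by force
      have "seminorm_ball {p} e x \<subseteq> {x \<in> topspace T. \<phi> x \<in> U}"
      proof
        fix y assume "y \<in> seminorm_ball {p} e x"
        then have "p (y - x) < e" by (simp add: seminorm_ball_def)
        then have "norm (\<phi> y - \<phi> x) < e" using dom[of "y - x"] diff by simp
        then have "\<phi> y \<in> ball (\<phi> x) e" by (simp add: dist_norm norm_minus_commute)
        then show "y \<in> {x \<in> topspace T. \<phi> x \<in> U}" using e by auto
      qed
      then show "\<exists>Q e. finite Q \<and> Q \<subseteq> P \<and> e > 0 \<and> seminorm_ball Q e x \<subseteq> {x \<in> topspace T. \<phi> x \<in> U}"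
        using p e by blast
    qed
  qed
  then show ?thesis unfolding dual_def using lin by blast
qed

lemma norming_functional_real_scalars:
  assumes real: "\<And>c::'k. \<exists>r. c = of_real r" and p: "p \<in> P"
  shows "\<exists>\<phi>\<in>dual smul P. (\<forall>x. norm (\<phi> x) \<le> p x) \<and> p x0 \<le> norm (\<phi> x0)"
proof -
  obtain f where f: "\<And>x y. f (x + y) = f x + f y" "\<And>r x. f (smul (of_real r) x) = r * f x"
    "\<And>x. f x \<le> p x" "f x0 = p x0" using real_hahn_banach[OF p, of x0] by blast
  define \<phi> where "\<phi> x = (of_real (f x) :: 'k)" for x
  have add: "\<phi> (x + y) = \<phi> x + \<phi> y" for x y unfolding \<phi>_def f(1) by simp
  have sc: "\<phi> (smul c x) = c * \<phi> x" for c x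
  proof -
    obtain r where "c = of_real r" using real by blast
    then show ?thesis unfolding \<phi>_def using f(2) by simp
  qed
  have dom: "norm (\<phi> x) \<le> p x" for x
  proof -
    have "- f x = f (smul (of_real (-1)) x)" using f(2)[of "-1" x] by simp
    also have "\<dots> \<le> p (smul (of_real (-1)) x)" by (rule f(3))
    also have "\<dots> = p x" using seminorm_scale_of_real[OF p, of "-1" x] by simp
    finally show ?thesis unfolding \<phi>_def using f(3)[of x] by simp
  qed
  have "\<phi> \<in> dual smul P" by (rule dominated_linear_in_dual[OF add sc p dom])
  moreover have "p x0 \<le> norm (\<phi> x0)" unfolding \<phi>_def f(4) using seminorm_nonneg[OF p] by simp
  ultimately show ?thesis using dom by blast
qed

text \<open>Complexification: a real-linear \<open>f\<close> is the real part of the scalar-linear functional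
  \<open>x \<mapsto> f x - j f (j x)\<close>.\<close>
lemma complexification_linear:
  assumes j: "j * j = -1" and jspan: "\<And>c. \<exists>r s. c = of_real r + of_real s * j"
    and fadd: "\<And>x y. f (x + y) = f x + f y" and fscale: "\<And>r x. f (smul (of_real r) x) = r * f x"
  defines "\<phi> \<equiv> \<lambda>x. of_real (f x) - j * of_real (f (smul j x))"
  shows "\<phi> (x + y) = \<phi> x + \<phi> y" and "\<phi> (smul c x) = c * \<phi> x"
proof -
  show add: "\<phi> (x + y) = \<phi> x + \<phi> y" for x y
    unfolding \<phi>_def by (simp add: fadd vs.scale_right_distrib algebra_simps)
  have scr: "\<phi> (smul (of_real r) x) = of_real r * \<phi> x" for r x
  proof -
    have "smul j (smul (of_real r) x) = smul (of_real r) (smul j x)" by (simp add: mult.commute)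
    then have "f (smul j (smul (of_real r) x)) = r * f (smul j x)" using fscale[of r "smul j x"] by metis
    then show ?thesis unfolding \<phi>_def fscale by (simp add: algebra_simps)
  qed
  have scj: "\<phi> (smul j x) = j * \<phi> x" for x
  proof -
    have "smul j (smul j x) = - x" using j by simp
    moreover have "f (- x) = - f x" using fscale[of "-1" x] by simp
    ultimately have "\<phi> (smul j x) = of_real (f (smul j x)) + j * of_real (f x)" unfolding \<phi>_def by simp
    also have "\<dots> = j * \<phi> x" unfolding \<phi>_def by (simp add: algebra_simps j mult.assoc[symmetric])
    finally show ?thesis .
  qed
  obtain r s where c: "c = of_real r + of_real s * j" using jspan by blast
  have "smul c x = smul (of_real r) x + smul (of_real s) (smul j x)" unfolding c by (simp add: vs.scale_left_distrib)
  then have "\<phi> (smul c x) = of_real r * \<phi> x + of_real s * (j * \<phi> x)" by (simp only: add scr scj)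
  then show "\<phi> (smul c x) = c * \<phi> x" unfolding c by (simp add: algebra_simps)
qed

lemma norming_functional_complex_scalars:
  assumes j: "j * j = -1" and jspan: "\<And>c. \<exists>r s. c = of_real r + of_real s * j"
    and C: "\<And>r s. C * \<bar>r\<bar> \<le> norm (of_real r + of_real s * j :: 'k)" and p: "p \<in> P"
  shows "\<exists>\<phi>\<in>dual smul P. (\<forall>x. norm (\<phi> x) \<le> p x) \<and> C * p x0 \<le> norm (\<phi> x0)"
proof -
  obtain f where f: "\<And>x y. f (x + y) = f x + f y" "\<And>r x. f (smul (of_real r) x) = r * f x"
    "\<And>x. f x \<le> p x" "f x0 = p x0" using real_hahn_banach[OF p, of x0] by blast
  define \<phi> where "\<phi> x = (of_real (f x) - j * of_real (f (smul j x)) :: 'k)" for x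
  note add = complexification_linear(1)[OF j jspan f(1,2), folded \<phi>_def]
  note sc = complexification_linear(2)[OF j jspan f(1,2), folded \<phi>_def]
  have dom: "norm (\<phi> x) \<le> p x" for x
  proof (cases "\<phi> x = 0")
    case True then show ?thesis using seminorm_nonneg[OF p] by simp
  next
    case False
    define w where "w = of_real (norm (\<phi> x)) / \<phi> x"
    have "\<phi> (smul w x) = of_real (norm (\<phi> x))" unfolding sc w_def using False by simp
    then have "f (smul w x) = norm (\<phi> x)"
      unfolding \<phi>_def using of_real_minus_imaginary_eq_of_real[OF j] by blast
    then have "norm (\<phi> x) \<le> p (smul w x)" using f(3) by metis
    also have "\<dots> = p x" using seminorm_scale[OF p] False by (simp add: w_def norm_divide)
    finally show ?thesis .
  qed
  have "\<phi> \<in> dual smul P" by (rule dominated_linear_in_dual[OF add sc p dom])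
  moreover have "C * p x0 \<le> norm (\<phi> x0)"
  proof -
    have "\<phi> x0 = of_real (p x0) + of_real (- f (smul j x0)) * j" unfolding \<phi>_def f(4) by (simp add: algebra_simps)
    then have "C * \<bar>p x0\<bar> \<le> norm (\<phi> x0)" using C by metis
    then show ?thesis using seminorm_nonneg[OF p, of x0] by simp
  qed
  ultimately show ?thesis using dom by blast
qed

lemma norming_dual_functionals: "\<exists>c>0. \<forall>p\<in>P. \<forall>x0. \<exists>\<phi>\<in>dual smul P. (\<forall>x. norm (\<phi> x) \<le> p x) \<and> c * p x0 \<le> norm (\<phi> x0)"
proof (cases "\<forall>c::'k. \<exists>r. c = of_real r")
  case True
  then show ?thesis using norming_functional_real_scalars by (intro exI[of _ 1]) auto
next
  case False
  then obtain j :: 'k where j: "j * j = -1" and jspan: "\<And>c. \<exists>r s. c = of_real r + of_real s * j"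
    using real_normed_field_real_or_complex by blast
  obtain C where "C > 0" "\<And>r s. C * \<bar>r\<bar> \<le> norm (of_real r + of_real s * j :: 'k)"
    using norm_real_part_lower_bound[OF j] by blast
  then show ?thesis using norming_functional_complex_scalars[OF j jspan] by blast
qed

definition dominated_functionals :: "('v \<Rightarrow> real) \<Rightarrow> ('v \<Rightarrow> 'k) set" where
  "dominated_functionals p = {\<phi> \<in> dual smul P. \<forall>x. norm (\<phi> x) \<le> p x}"

lemma bdd_above_dominated_functionals: "bdd_above ((\<lambda>\<phi>. norm (\<phi> x)) ` dominated_functionals p)"
  by (rule bdd_aboveI[of _ "p x"]) (auto simp: dominated_functionals_def)

lemma sup_dominated_functionals_strong:
  "sup_seminorm (dominated_functionals p) \<in> strong_seminorms smul P"
  unfolding strong_seminorms_iff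
  by (intro exI[of _ "dominated_functionals p"] conjI allI bdd_above_dominated_functionals refl)
    (auto simp: dominated_functionals_def)

lemma seminorm_le_sup_dominated_functionals:
  obtains c where "c > 0" "\<And>p x. p \<in> P \<Longrightarrow> c * p x \<le> sup_seminorm (dominated_functionals p) x"
proof -
  obtain c where c: "c > 0"
    "\<And>p x0. p \<in> P \<Longrightarrow> \<exists>\<phi>\<in>dual smul P. (\<forall>x. norm (\<phi> x) \<le> p x) \<and> c * p x0 \<le> norm (\<phi> x0)"
    using norming_dual_functionals by blast
  have "c * p x \<le> sup_seminorm (dominated_functionals p) x" if pP: "p \<in> P" for p x
  proof -
    obtain \<phi> where \<phi>: "\<phi> \<in> dominated_functionals p" "c * p x \<le> norm (\<phi> x)"
      using c(2)[OF pP] unfolding dominated_functionals_def by blast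
    from sup_seminorm_upper[OF bdd_above_dominated_functionals \<phi>(1), of x] show ?thesis
      using \<phi>(2) by linarith
  qed
  then show thesis using that c(1) by blast
qed

lemma precompact_strong_imp_precompact:
  assumes A: "precompact (strong_top smul P) A"
  shows "precompact T A"
proof (rule precompact_finer_nhds[OF A])
  obtain c where c: "c > 0" and low: "\<And>p x. p \<in> P \<Longrightarrow> c * p x \<le> sup_seminorm (dominated_functionals p) x"
    using seminorm_le_sup_dominated_functionals by blast
  let ?q = "\<lambda>p. sup_seminorm (dominated_functionals p)"
  fix U assume "openin T U" "0 \<in> U"
  then obtain Q e where Q: "finite Q" "Q \<subseteq> P" "e > 0" "seminorm_ball Q e 0 \<subseteq> U" using openin_T_iff by meson
  define W where "W = seminorm_ball (?q ` Q) (c * e) 0"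
  have tri: "q (a + b) \<le> q a + q b" if qQ: "q \<in> ?q ` Q" for q a b
  proof -
    obtain p where q: "q = ?q p" using qQ by blast
    have "dominated_functionals p \<subseteq> dual smul P" unfolding dominated_functionals_def by blast
    then show ?thesis unfolding q by (rule sup_seminorm_triangle[OF _ bdd_above_dominated_functionals])
  qed
  have "finite (?q ` Q)" using Q(1) by simp
  moreover have "?q ` Q \<subseteq> strong_seminorms smul P" using sup_dominated_functionals_strong by blast
  ultimately have "openin (strong_top smul P) W"
    unfolding W_def strong_top_def by (rule openin_seminorm_top_seminorm_ball[OF _ _ tri])
  moreover have "0 \<in> W"
  proof -
    have "\<phi> 0 = 0" if "\<phi> \<in> dominated_functionals p" for \<phi> p
      using that unfolding dominated_functionals_def by (simp add: dual_zero)
    then have "?q p 0 \<le> 0" for p by (intro sup_seminorm_least) auto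
    moreover have "0 < c * e" using c Q(3) by simp
    ultimately have "\<forall>q\<in>?q ` Q. q 0 < c * e" by (metis (no_types, lifting) imageE le_less_trans)
    then show ?thesis unfolding W_def seminorm_ball_def by simp
  qed
  moreover have "W \<subseteq> U"
  proof
    fix y assume y: "y \<in> W"
    have "p y < e" if p: "p \<in> Q" for p
    proof -
      have "?q p y < c * e" using y p unfolding W_def seminorm_ball_def by simp
      moreover have "c * p y \<le> ?q p y" using low p Q(2) by blast
      ultimately have "c * p y < c * e" by linarith
      then show ?thesis using c by simp
    qed
    then show "y \<in> U" using Q(4) by (auto simp: seminorm_ball_def)
  qed
  ultimately show "\<exists>W. openin (strong_top smul P) W \<and> 0 \<in> W \<and> W \<subseteq> U" by blast
qed

end

theorem propositionp:
  fixes smul :: "'k::{real_normed_field, banach} \<Rightarrow> 'v::ab_group_add \<Rightarrow> 'v"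
    and P :: "('v \<Rightarrow> real) set"
    and p q :: ereal
  assumes "lcs smul P"
    and "1 \<le> p" and "p \<le> q"
    and "angelic (seminorm_top P)"
    and "complete_lcs P"
    and "barrelled smul P"
  shows "(GP smul P p q \<longleftrightarrow> EGP smul P p q) \<and>
         (GP smul P p q \<longleftrightarrow> sGP smul P p q) \<and>
         (GP smul P p q \<longleftrightarrow> sEGP smul P p q) \<and>
         (GP smul P p q \<longleftrightarrow> prGP smul P p q) \<and>
         (GP smul P p q \<longleftrightarrow> prEGP smul P p q) \<and>
         (GP smul P p q \<longleftrightarrow> spGP smul P p q) \<and>
         (GP smul P p q \<longleftrightarrow> spEGP smul P p q) \<and>
         (GP smul P p q \<longleftrightarrow> bGP smul P p q)"
proof -
  interpret lcs_space smul P by unfold_locales (rule assms(1))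
  have limited: "pq_E_limited smul P p q A \<longleftrightarrow> pq_limited smul P p q A" for A
    by (rule pq_E_limited_iff_pq_limited[OF assms(6,2)])
  have rel_compact_iff_precompact: "rel_compact T A \<longleftrightarrow> precompact T A" for A
    using rel_compact_imp_precompact precompact_imp_rel_compact[OF assms(4,5)] by blast
  have rel_compact_iff_rel_seq_compact: "rel_compact T A \<longleftrightarrow> rel_seq_compact T A" for A
    using rel_compact_imp_rel_seq_compact[OF assms(4)] rel_seq_compact_imp_rel_compact[OF assms(4)] by blast
  have rel_seq_compact_iff_seq_precompact: "rel_seq_compact T A \<longleftrightarrow> seq_precompact P A" for A
    using rel_seq_compact_imp_seq_precompact seq_precompact_imp_rel_seq_compact[OF assms(5)] by blast
  have precompact_iff_precompact_strong: "precompact T A \<longleftrightarrow> precompact (strong_top smul P) A" for A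
    using precompact_imp_precompact_strong[OF assms(6)] precompact_strong_imp_precompact by blast
  show ?thesis
    unfolding GP_def EGP_def sGP_def sEGP_def prGP_def prEGP_def spGP_def spEGP_def bGP_def
    using limited rel_compact_iff_precompact rel_compact_iff_rel_seq_compact
      rel_seq_compact_iff_seq_precompact precompact_iff_precompact_strong
    by metis
qed

end
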